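(* Let $\gamma>0$ and $r,k,q\in\mathbb{N}$ with $r/2<k\leq r-1$ and $r=k+q$. Let $c:=\lceil r/q\rceil$. Let $H_0$ be the complete bipartite graph $K_{k,q+1}$ with distinguished ordered pair $(w_1,w_2)$ of two distinct vertices both in the part of size $q+1$, and for $t\in\mathbb{N}$ let $\bm{{\mathcal H}}^t:=\{(H_0,s):1\leq s\leq 2^t\}$, where $(H_0,s)$ denotes the vector of length $s$ all of whose entries are $H_0$. Then there exist constants $\beta_3'=\beta_3'(r,k,\gamma)>0$ and $\alpha=\alpha(r,k,\gamma)>0$ such that for all sufficiently large $n$, the vertex set of any $n$-vertex graph $G$ with $\delta(G)\geq(1-\frac{k}{r}+\gamma)n$ can be partitioned into at most $c-1$ parts, each of which is $(\bm{{\mathcal H}}^c;\beta_3')$-closed and has size at least $\alpha n$.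
   Context: Let $\bm{H}=(H^1,\dots,H^t)$ be a vector of $(r+1)$-vertex graphs, each with an ordered pair of distinct distinguished vertices $(w_1^i,w_2^i)$. An $\bm{H}$-path is obtained by taking vertex-disjoint copies of $H^1,\dots,H^t$ and identifying $w_2^i$ with $w_1^{i+1}$ for $i\in[t-1]$; its endpoints are $w_1^1$ and $w_2^t$. Two vertices $x,y$ of an $n$-vertex graph $G$ are $(\bm{H};\beta)$-reachable if there are at least $\beta n^{tr-1}$ distinct labelled embeddings of the $\bm{H}$-path into $G$ mapping the endpoints to $\{x,y\}$. For a set $\bm{{\mathcal H}}$ of such vectors, $x,y$ are $(\bm{{\mathcal H}};\beta)$-reachable if they are $(\bm{H};\beta)$-reachable for some $\bm{H}\in\bm{{\mathcal H}}$, and a vertex set $V'\subseteq V(G)$ is $(\bm{{\mathcal H}};\beta)$-closed if every pair of vertices of $V'$ is $(\bm{{\mathcal H}};\beta)$-reachable in $G$ (the paths need not lie inside $V'$). *)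

theory Defs
  imports Complex_Main "HOL-Library.Disjoint_Sets" "HOL-Library.FuncSet"
begin

definition is_graph :: "'a set \<Rightarrow> ('a \<Rightarrow> 'a \<Rightarrow> bool) \<Rightarrow> bool" where
  "is_graph V E \<longleftrightarrow> finite V \<and> (\<forall>u v. E u v \<longrightarrow> u \<in> V \<and> v \<in> V \<and> E v u \<and> u \<noteq> v)"

definition min_deg_ge :: "'a set \<Rightarrow> ('a \<Rightarrow> 'a \<Rightarrow> bool) \<Rightarrow> real \<Rightarrow> bool" where
  "min_deg_ge V E d \<longleftrightarrow> (\<forall>v\<in>V. real (card {u\<in>V. E v u}) \<ge> d)"

text \<open>The (H0,s)-path, where H0 = K_{k,q+1} with distinguished vertices w1,w2
both in the part of size q+1.  Vertices:
  J j   (j \<le> s): the joint vertices; J i = w1 of copy i, J (i+1) = w2 of copy i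
        (so copy i's w2 is identified with copy (i+1)'s w1); J 0, J s are the endpoints;
  A i a (i < s, a < k): the part of size k of copy i;
  B i b (i < s, b < q - 1): the remaining q-1 vertices of the part of size q+1 of copy i.\<close>

datatype pvert = J nat | A nat nat | B nat nat

definition path_verts :: "nat \<Rightarrow> nat \<Rightarrow> nat \<Rightarrow> pvert set" where
  "path_verts k q s =
     {J j | j. j \<le> s} \<union> {A i a | i a. i < s \<and> a < k} \<union> {B i b | i b. i < s \<and> b < q - 1}"

definition path_edge_dir :: "pvert \<Rightarrow> pvert \<Rightarrow> bool" where
  "path_edge_dir u v \<longleftrightarrow>
     (\<exists>i a. u = A i a \<and> (v = J i \<or> v = J (Suc i) \<or> (\<exists>b. v = B i b)))"

definition path_edge :: "pvert \<Rightarrow> pvert \<Rightarrow> bool" where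
  "path_edge u v \<longleftrightarrow> path_edge_dir u v \<or> path_edge_dir v u"

definition path_embeddings ::
  "nat \<Rightarrow> nat \<Rightarrow> nat \<Rightarrow> 'a set \<Rightarrow> ('a \<Rightarrow> 'a \<Rightarrow> bool) \<Rightarrow> 'a \<Rightarrow> 'a \<Rightarrow> (pvert \<Rightarrow> 'a) set" where
  "path_embeddings k q s V E x y =
     {f \<in> extensional_funcset (path_verts k q s) V.
        inj_on f (path_verts k q s) \<and>
        (\<forall>u\<in>path_verts k q s. \<forall>v\<in>path_verts k q s. path_edge u v \<longrightarrow> E (f u) (f v)) \<and>
        {f (J 0), f (J s)} = {x, y}}"

text \<open>(H;beta)-reachability with H = (H0,s): each H0 has r+1 = k+q+1 vertices.\<close>

definition path_reachable ::
  "nat \<Rightarrow> nat \<Rightarrow> nat \<Rightarrow> real \<Rightarrow> 'a set \<Rightarrow> ('a \<Rightarrow> 'a \<Rightarrow> bool) \<Rightarrow> 'a \<Rightarrow> 'a \<Rightarrow> bool" where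
  "path_reachable k q s \<beta> V E x y \<longleftrightarrow>
     real (card (path_embeddings k q s V E x y)) \<ge> \<beta> * real (card V) ^ (s * (k + q) - 1)"

definition family_reachable ::
  "nat \<Rightarrow> nat \<Rightarrow> nat \<Rightarrow> real \<Rightarrow> 'a set \<Rightarrow> ('a \<Rightarrow> 'a \<Rightarrow> bool) \<Rightarrow> 'a \<Rightarrow> 'a \<Rightarrow> bool" where
  "family_reachable k q t \<beta> V E x y \<longleftrightarrow>
     (\<exists>s. 1 \<le> s \<and> s \<le> 2 ^ t \<and> path_reachable k q s \<beta> V E x y)"

definition family_closed ::
  "nat \<Rightarrow> nat \<Rightarrow> nat \<Rightarrow> real \<Rightarrow> 'a set \<Rightarrow> ('a \<Rightarrow> 'a \<Rightarrow> bool) \<Rightarrow> 'a set \<Rightarrow> bool" where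
  "family_closed k q t \<beta> V E W \<longleftrightarrow>
     (\<forall>x\<in>W. \<forall>y\<in>W. x \<noteq> y \<longrightarrow> family_reachable k q t \<beta> V E x y)"

end

theory Submission
  imports Defs "HOL-Analysis.Convex"
begin

text \<open>
  Let \<open>c = \<lceil>r/q\<rceil>\<close>, so that the minimum degree is at least \<open>(1/c + g) n\<close> for some \<open>g > 0\<close>,
  and write \<open>R\<^sub>l\<close> for \<open>(\<H>\<^sup>l; \<beta>\<^sub>l)\<close>-reachability with suitable decreasing \<open>\<beta>\<^sub>l\<close>.
  Two vertices with \<open>\<epsilon>n\<close> common neighbours are \<open>R\<^sub>0\<close>-reachable through single copies of
  \<open>K\<^sub>k\<^sub>,\<^sub>q\<^sub>+\<^sub>1\<close> (counted with Jensen's inequality); hence every vertex is \<open>R\<^sub>0\<close>-reachable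
  from \<open>\<Omega>(n)\<close> vertices, and among any \<open>c\<close> vertices two are \<open>R\<^sub>0\<close>-reachable, as their
  neighbourhoods cannot be almost disjoint. Concatenating paths, two vertices with \<open>\<Omega>(n)\<close>
  common \<open>R\<^sub>l\<close>-midpoints are \<open>R\<^sub>l\<^sub>+\<^sub>1\<close>-reachable.

  The size of a largest \<open>R\<^sub>l\<close>-independent set is below \<open>c\<close> and does not increase with \<open>l\<close>,
  so it is the same at two consecutive levels \<open>m, m + 1 < c\<close>. Take a maximum
  \<open>R\<^sub>m\<^sub>+\<^sub>1\<close>-independent set \<open>F\<close>; it is also a maximum \<open>R\<^sub>m\<close>-independent set. The vertices
  \<open>R\<^sub>m\<close>-reachable from exactly one \<open>v \<in> F\<close> form pairwise \<open>R\<^sub>m\<close>-reachable cores of linear size,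
  the few remaining vertices join a core in which they have many \<open>R\<^sub>m\<close>-neighbours, and the
  resulting \<open>|F| < c\<close> parts are \<open>R\<^sub>m\<^sub>+\<^sub>2\<close>-closed.
\<close>

section \<open>Partitions from leveled reachability\<close>

lemma real_card_Diff_singleton_ge:
  assumes "finite S"
  shows "real (card S) - 1 \<le> real (card (S - {w}))"
  using assms by (cases "w \<in> S") (auto simp: card_Diff_singleton_if card_gt_0_iff)

lemma real_card_le_card_plus_sum_UN:
  assumes "finite S" "finite I" "\<And>i. i \<in> I \<Longrightarrow> finite (C i)" "T \<subseteq> S \<union> (\<Union>i\<in>I. C i)"
  shows "real (card T) \<le> real (card S) + (\<Sum>i\<in>I. real (card (C i)))"
proof -
  have "card T \<le> card (S \<union> (\<Union>i\<in>I. C i))"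
    using assms by (intro card_mono) auto
  also have "\<dots> \<le> card S + card (\<Union>i\<in>I. C i)"
    by (rule card_Un_le)
  also have "card (\<Union>i\<in>I. C i) \<le> (\<Sum>i\<in>I. card (C i))"
    using assms(2) by (rule card_UN_le)
  finally show ?thesis
    by (simp flip: of_nat_sum)
qed

lemma real_card_le_sum_card_UN:
  assumes "finite I" "\<And>i. i \<in> I \<Longrightarrow> finite (C i)" "T \<subseteq> (\<Union>i\<in>I. C i)"
  shows "real (card T) \<le> (\<Sum>i\<in>I. real (card (C i)))"
  using real_card_le_card_plus_sum_UN[of "{}" I C T] assms by simp

lemma nonincreasing_stalls_below:
  fixes f :: "nat \<Rightarrow> nat"
  assumes mono: "\<And>l. f (Suc l) \<le> f l" and f0: "f 0 < c" and pos: "\<And>l. 0 < f l"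
  shows "\<exists>m. Suc m < c \<and> f (Suc m) = f m"
proof (rule ccontr)
  assume "\<nexists>m. Suc m < c \<and> f (Suc m) = f m"
  then have drop: "f (Suc m) < f m" if "Suc m < c" for m
    using that mono[of m] by fastforce
  have "f j + j \<le> f 0" if "j < c" for j
    using that by (induction j) (auto dest: drop)
  from this[of "c - 1"] f0 pos[of "c - 1"] show False by simp
qed

locale leveled_reachability =
  fixes V :: "'a set" and R :: "nat \<Rightarrow> 'a \<Rightarrow> 'a \<Rightarrow> bool" and c :: nat and \<delta> \<theta> :: real
  assumes finite_V: "finite V"
    and R_sym: "R l x y \<Longrightarrow> R l y x"
    and R_Suc: "R l x y \<Longrightarrow> R (Suc l) x y"
    and R0_degree: "x \<in> V \<Longrightarrow> \<delta> * real (card V) \<le> real (card {y\<in>V. y \<noteq> x \<and> R 0 x y})"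
    and R0_in_large_sets: "S \<subseteq> V \<Longrightarrow> c \<le> card S \<Longrightarrow> \<exists>x\<in>S. \<exists>y\<in>S. x \<noteq> y \<and> R 0 x y"
    and R_Suc_if_many_midpoints: "l < c \<Longrightarrow> x \<in> V \<Longrightarrow> y \<in> V \<Longrightarrow> x \<noteq> y \<Longrightarrow>
      \<theta> * real (card V) \<le> real (card {z\<in>V. R l x z \<and> R l z y}) \<Longrightarrow> R (Suc l) x y"
    and \<theta>_pos: "0 < \<theta>" and \<theta>_small: "4 * real c ^ 2 * \<theta> \<le> \<delta>"
    and V_large: "2 * real c < \<delta> * real (card V)"
begin

lemma R_mono: "l \<le> l' \<Longrightarrow> R l x y \<Longrightarrow> R l' x y"
  by (induction l' rule: dec_induct) (auto intro: R_Suc)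

lemma V_nonempty: "V \<noteq> {}"
  using V_large by auto

lemma c_pos: "0 < c"
  using V_nonempty R0_in_large_sets[of "{}"] by (cases c) auto

lemma c_theta_le: "real c * \<theta> \<le> \<delta> / 4"
proof -
  have "real c \<le> real c ^ 2"
    using c_pos by (simp add: power2_eq_square)
  then show ?thesis
    using \<theta>_pos \<theta>_small mult_right_mono[of "real c" "real c ^ 2" \<theta>] by linarith
qed

definition independent_at :: "nat \<Rightarrow> 'a set \<Rightarrow> bool" where
  "independent_at l S \<longleftrightarrow> S \<subseteq> V \<and> (\<forall>x\<in>S. \<forall>y\<in>S. x \<noteq> y \<longrightarrow> \<not> R l x y)"

lemma independent_at_insert:
  "independent_at l (insert w S) \<longleftrightarrow> independent_at l S \<and> w \<in> V \<and> (\<forall>v\<in>S. v \<noteq> w \<longrightarrow> \<not> R l w v)"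
  unfolding independent_at_def by (auto intro: R_sym)

lemma independent_at_Suc: "independent_at (Suc l) S \<Longrightarrow> independent_at l S"
  unfolding independent_at_def using R_Suc by blast

lemma independent_at_card_less:
  assumes "independent_at l S" shows "card S < c"
proof (rule ccontr)
  assume "\<not> card S < c"
  with assms R0_in_large_sets obtain x y where "x \<in> S" "y \<in> S" "x \<noteq> y" "R 0 x y"
    unfolding independent_at_def by (meson not_less)
  with assms R_mono[of 0 l] show False
    unfolding independent_at_def by blast
qed

lemma finite_independent_at: "independent_at l S \<Longrightarrow> finite S"
  unfolding independent_at_def using finite_V finite_subset by blast

definition independence_number :: "nat \<Rightarrow> nat" where
  "independence_number l = Max (card ` Collect (independent_at l))"

lemma finite_Collect_independent_at: "finite (Collect (independent_at l))"
  by (rule finite_subset[of _ "Pow V"]) (auto simp: independent_at_def finite_V)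

lemma card_le_independence_number: "independent_at l S \<Longrightarrow> card S \<le> independence_number l"
  unfolding independence_number_def using finite_Collect_independent_at by (intro Max_ge) auto

lemma independence_number_attained: "\<exists>S. independent_at l S \<and> card S = independence_number l"
proof -
  have "independent_at l {}" by (simp add: independent_at_def)
  then have "independence_number l \<in> card ` Collect (independent_at l)"
    unfolding independence_number_def using finite_Collect_independent_at by (intro Max_in) auto
  then show ?thesis by auto
qed

lemma independence_number_Suc_le: "independence_number (Suc l) \<le> independence_number l"
  using independence_number_attained[of "Suc l"] card_le_independence_number independent_at_Suc
  by metis

lemma independence_number_less: "independence_number l < c"
  using independence_number_attained independent_at_card_less by metis

lemma independence_number_pos: "0 < independence_number l"
proof -
  obtain v where "v \<in> V" using V_nonempty by blast
  then have "independent_at l {v}" by (simp add: independent_at_def)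
  then show ?thesis using card_le_independence_number[of l "{v}"] by simp
qed

lemma independence_number_stalls:
  "\<exists>m. Suc m < c \<and> independence_number (Suc m) = independence_number m"
  by (rule nonincreasing_stalls_below)
     (auto simp: independence_number_Suc_le independence_number_less independence_number_pos)

lemma maximum_independent_dominates:
  assumes "independent_at l S" "card S = independence_number l" "w \<in> V" "w \<notin> S"
  shows "\<exists>v\<in>S. R l w v"
proof (rule ccontr)
  assume "\<not> ?thesis"
  then have "independent_at l (insert w S)"
    using assms by (auto simp: independent_at_insert)
  then have "card (insert w S) \<le> card S"
    using assms(2) card_le_independence_number by metis
  with assms finite_independent_at show False by simp
qed

definition nbhd :: "nat \<Rightarrow> 'a \<Rightarrow> 'a set" where
  "nbhd l x = {y\<in>V. y \<noteq> x \<and> R l x y}"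

lemma finite_nbhd [simp]: "finite (nbhd l x)"
  unfolding nbhd_def using finite_V by simp

lemma card_nbhd_ge:
  assumes "x \<in> V" shows "\<delta> * real (card V) \<le> real (card (nbhd l x))"
proof -
  have "nbhd 0 x \<subseteq> nbhd l x"
    unfolding nbhd_def using R_mono[of 0 l] by auto
  then have "card (nbhd 0 x) \<le> card (nbhd l x)"
    by (intro card_mono) auto
  then show ?thesis
    using R0_degree[OF assms] unfolding nbhd_def by linarith
qed

end

locale leveled_reachability_plateau = leveled_reachability +
  fixes m :: nat and F :: "'a set"
  assumes plateau_level: "Suc m < c"
    and F_independent: "independent_at (Suc m) F"
    and card_F: "card F = independence_number m"
begin

lemma F_independent_m: "independent_at m F"
  using F_independent by (rule independent_at_Suc)

lemma F_subset: "F \<subseteq> V"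
  using F_independent unfolding independent_at_def by blast

lemma finite_F: "finite F"
  using F_independent by (rule finite_independent_at)

lemma card_F_less: "card F < c"
  using F_independent by (rule independent_at_card_less)

lemma few_common_nbhd:
  assumes "v \<in> F" "v' \<in> F" "v \<noteq> v'"
  shows "real (card (nbhd m v \<inter> nbhd m v')) < \<theta> * real (card V)"
proof (rule ccontr)
  assume "\<not> ?thesis"
  moreover have "nbhd m v \<inter> nbhd m v' \<subseteq> {z\<in>V. R m v z \<and> R m z v'}"
    unfolding nbhd_def using R_sym by blast
  then have "card (nbhd m v \<inter> nbhd m v') \<le> card {z\<in>V. R m v z \<and> R m z v'}"
    using finite_V by (intro card_mono) auto
  ultimately have "\<theta> * real (card V) \<le> real (card {z\<in>V. R m v z \<and> R m z v'})"
    by linarith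
  then have "R (Suc m) v v'"
    using plateau_level assms F_subset by (intro R_Suc_if_many_midpoints) auto
  with F_independent assms show False
    unfolding independent_at_def by blast
qed

definition core :: "'a \<Rightarrow> 'a set" where
  "core v = {u\<in>V. (u = v \<or> R m v u) \<and> (\<forall>v'\<in>F - {v}. u \<noteq> v' \<and> \<not> R m v' u)}"

lemma finite_core [simp]: "finite (core v)"
  unfolding core_def using finite_V by simp

lemma self_in_core: "v \<in> F \<Longrightarrow> v \<in> core v"
  using F_subset F_independent_m unfolding core_def independent_at_def by blast

lemma core_disjoint: "v \<in> F \<Longrightarrow> v' \<in> F \<Longrightarrow> v \<noteq> v' \<Longrightarrow> core v \<inter> core v' = {}"
  unfolding core_def by blast

lemma core_unrelated_to_others:
  assumes "u \<in> core v" "v' \<in> F - {v}"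
  shows "u \<noteq> v'" "\<not> R m v' u" "\<not> R m u v'"
  using assms R_sym unfolding core_def by blast+

text \<open>\<open>insert u (F - {v})\<close> is again a maximum \<open>R\<^sub>m\<close>-independent set, so \<open>w\<close> is related to one
  of its elements, and by definition of the core that element can only be \<open>u\<close>.\<close>

lemma R_in_core:
  assumes "v \<in> F" "u \<in> core v" "w \<in> core v" "u \<noteq> w"
  shows "R m w u"
proof -
  let ?G = "insert u (F - {v})"
  have u: "u \<in> V" "u \<notin> F - {v}" and w: "w \<in> V" "w \<notin> F - {v}"
    using assms(2,3) unfolding core_def by auto
  have "independent_at m (F - {v})"
    using F_independent_m unfolding independent_at_def by blast
  then have "independent_at m ?G"
    using u(1) core_unrelated_to_others(3)[OF assms(2)] unfolding independent_at_insert by blast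
  moreover have "card ?G = independence_number m"
    using u(2) finite_F assms(1) card_F independence_number_pos[of m] by simp
  moreover have "w \<notin> ?G"
    using w(2) assms(4) by blast
  ultimately obtain v'' where "v'' \<in> ?G" "R m w v''"
    using maximum_independent_dominates w(1) by blast
  moreover have "\<not> R m w v''" if "v'' \<in> F - {v}"
    using core_unrelated_to_others(3)[OF assms(3) that] .
  ultimately show ?thesis by blast
qed

lemma card_core_ge:
  assumes "v \<in> F"
  shows "\<delta> / 2 * real (card V) \<le> real (card (core v))"
proof -
  have "nbhd m v \<subseteq> core v \<union> (\<Union>v'\<in>F - {v}. nbhd m v \<inter> nbhd m v')"
  proof
    fix u assume u: "u \<in> nbhd m v"
    then have u_notin: "u \<notin> F - {v}"
      using assms F_independent_m unfolding nbhd_def independent_at_def by auto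
    show "u \<in> core v \<union> (\<Union>v'\<in>F - {v}. nbhd m v \<inter> nbhd m v')"
    proof (cases "\<exists>v'\<in>F - {v}. R m v' u")
      case True
      then show ?thesis using u u_notin unfolding nbhd_def by blast
    next
      case False
      then show ?thesis using u u_notin unfolding nbhd_def core_def by auto
    qed
  qed
  then have "real (card (nbhd m v)) \<le> real (card (core v)) + (\<Sum>v'\<in>F - {v}. real (card (nbhd m v \<inter> nbhd m v')))"
    using finite_F by (intro real_card_le_card_plus_sum_UN) auto
  also have "(\<Sum>v'\<in>F - {v}. real (card (nbhd m v \<inter> nbhd m v'))) \<le> real (card (F - {v})) * (\<theta> * real (card V))"
    using few_common_nbhd assms by (intro sum_bounded_above) (auto intro: less_imp_le)
  also have "\<dots> \<le> real c * (\<theta> * real (card V))"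
  proof (rule mult_right_mono)
    show "real (card (F - {v})) \<le> real c"
      using card_F_less card_Diff1_le[of F v] by simp
    show "0 \<le> \<theta> * real (card V)"
      using \<theta>_pos by simp
  qed
  also have "\<dots> \<le> \<delta> / 4 * real (card V)"
    using c_theta_le mult_right_mono[of "real c * \<theta>" "\<delta> / 4" "real (card V)"]
    by (simp add: mult.assoc)
  finally have "real (card (nbhd m v)) \<le> real (card (core v)) + \<delta> / 4 * real (card V)"
    by simp
  moreover have "\<delta> * real (card V) \<le> real (card (nbhd m v))"
    using assms F_subset by (intro card_nbhd_ge) auto
  ultimately show ?thesis
    using V_large by linarith
qed

definition leftover :: "'a set" where
  "leftover = V - (\<Union>v\<in>F. core v)"

lemma finite_leftover [simp]: "finite leftover"
  unfolding leftover_def using finite_V by simp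

lemma leftover_subset:
  "leftover \<subseteq> (\<Union>p\<in>{p \<in> F \<times> F. fst p \<noteq> snd p}. nbhd m (fst p) \<inter> nbhd m (snd p))"
proof
  fix u assume u: "u \<in> leftover"
  then have uV: "u \<in> V" and not_core: "\<forall>v\<in>F. u \<notin> core v"
    unfolding leftover_def by auto
  then have "u \<notin> F"
    using self_in_core by auto
  then obtain v where v: "v \<in> F" "R m u v"
    using maximum_independent_dominates[OF F_independent_m card_F uV] by auto
  moreover have "R m v u"
    using v(2) by (rule R_sym)
  ultimately have "\<exists>v'\<in>F - {v}. u = v' \<or> R m v' u"
    using not_core uV unfolding core_def by auto
  then obtain v' where v': "v' \<in> F - {v}" "u = v' \<or> R m v' u"
    by auto
  then have "u \<in> nbhd m v \<inter> nbhd m v'"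
    using v uV \<open>u \<notin> F\<close> R_sym unfolding nbhd_def by auto
  with v v' show "u \<in> (\<Union>p\<in>{p \<in> F \<times> F. fst p \<noteq> snd p}. nbhd m (fst p) \<inter> nbhd m (snd p))"
    by (intro UN_I[of "(v, v')"]) auto
qed

lemma card_leftover_le: "real (card leftover) \<le> \<delta> / 4 * real (card V)"
proof -
  let ?D = "{p \<in> F \<times> F. fst p \<noteq> snd p}"
  have "real (card leftover) \<le> (\<Sum>p\<in>?D. real (card (nbhd m (fst p) \<inter> nbhd m (snd p))))"
    using leftover_subset finite_F by (intro real_card_le_sum_card_UN) auto
  also have "\<dots> \<le> real (card ?D) * (\<theta> * real (card V))"
    using few_common_nbhd by (intro sum_bounded_above) (auto intro: less_imp_le)
  also have "\<dots> \<le> real c ^ 2 * (\<theta> * real (card V))"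
  proof (rule mult_right_mono)
    have "card ?D \<le> card (F \<times> F)"
      using finite_F by (intro card_mono) auto
    also have "\<dots> \<le> c ^ 2"
      using card_F_less by (simp add: card_cartesian_product power2_eq_square mult_mono)
    finally show "real (card ?D) \<le> real c ^ 2"
      by (simp flip: of_nat_power)
    show "0 \<le> \<theta> * real (card V)"
      using \<theta>_pos by simp
  qed
  also have "\<dots> \<le> \<delta> / 4 * real (card V)"
    using \<theta>_small mult_right_mono[of "real c ^ 2 * \<theta>" "\<delta> / 4" "real (card V)"]
    by (simp add: mult.assoc)
  finally show ?thesis .
qed

text \<open>Otherwise the leftover and the cores would contain at most \<open>\<delta>n/2 + c\<close> of the at least
  \<open>\<delta>n\<close> \<open>R\<^sub>m\<close>-neighbours of \<open>u\<close>.\<close>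

lemma leftover_has_anchor:
  assumes "u \<in> leftover"
  shows "\<exists>v\<in>F. \<theta> * real (card V) + 1 \<le> real (card (nbhd m u \<inter> core v))"
proof (rule ccontr)
  assume "\<not> ?thesis"
  then have few: "real (card (nbhd m u \<inter> core v)) \<le> \<theta> * real (card V) + 1" if "v \<in> F" for v
    using that by fastforce
  have "nbhd m u \<subseteq> leftover \<union> (\<Union>v\<in>F. nbhd m u \<inter> core v)"
    unfolding leftover_def nbhd_def by auto
  then have "real (card (nbhd m u)) \<le> real (card leftover) + (\<Sum>v\<in>F. real (card (nbhd m u \<inter> core v)))"
    using finite_F by (intro real_card_le_card_plus_sum_UN) auto
  also have "(\<Sum>v\<in>F. real (card (nbhd m u \<inter> core v))) \<le> real (card F) * (\<theta> * real (card V) + 1)"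
    using few by (rule sum_bounded_above)
  also have "\<dots> \<le> real c * (\<theta> * real (card V) + 1)"
    using card_F_less \<theta>_pos by (intro mult_right_mono) auto
  also have "\<dots> \<le> \<delta> / 4 * real (card V) + real c"
    using c_theta_le mult_right_mono[of "real c * \<theta>" "\<delta> / 4" "real (card V)"]
    by (simp add: algebra_simps)
  finally have "real (card (nbhd m u)) \<le> \<delta> / 2 * real (card V) + real c"
    using card_leftover_le by linarith
  moreover have "\<delta> * real (card V) \<le> real (card (nbhd m u))"
    using assms unfolding leftover_def by (intro card_nbhd_ge) auto
  ultimately show False
    using V_large by linarith
qed

definition anchor :: "'a \<Rightarrow> 'a" where
  "anchor u = (SOME v. v \<in> F \<and> \<theta> * real (card V) + 1 \<le> real (card (nbhd m u \<inter> core v)))"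

lemma anchor:
  assumes "u \<in> leftover"
  shows "anchor u \<in> F" "\<theta> * real (card V) + 1 \<le> real (card (nbhd m u \<inter> core (anchor u)))"
  using someI_ex[OF leftover_has_anchor[OF assms, unfolded Bex_def]] unfolding anchor_def by auto

lemma R_Suc_leftover_core:
  assumes "u \<in> leftover" "w \<in> core (anchor u)"
  shows "R (Suc m) u w"
proof -
  have uV: "u \<in> V" and wV: "w \<in> V" and "u \<noteq> w"
    using assms anchor(1)[OF assms(1)] unfolding leftover_def core_def by auto
  have "(nbhd m u \<inter> core (anchor u)) - {w} \<subseteq> {z\<in>V. R m u z \<and> R m z w}"
  proof
    fix z assume z: "z \<in> (nbhd m u \<inter> core (anchor u)) - {w}"
    then have "R m w z"
      using R_in_core[OF anchor(1)[OF assms(1)] _ assms(2)] by auto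
    then show "z \<in> {z\<in>V. R m u z \<and> R m z w}"
      using z R_sym unfolding nbhd_def by auto
  qed
  then have "real (card (nbhd m u \<inter> core (anchor u))) - 1 \<le> real (card {z\<in>V. R m u z \<and> R m z w})"
    using real_card_Diff_singleton_ge[of "nbhd m u \<inter> core (anchor u)" w] finite_V
      card_mono[of "{z\<in>V. R m u z \<and> R m z w}" "(nbhd m u \<inter> core (anchor u)) - {w}"]
    by fastforce
  then show ?thesis
    using anchor(2)[OF assms(1)] plateau_level uV wV \<open>u \<noteq> w\<close>
    by (intro R_Suc_if_many_midpoints) auto
qed

lemma R_Suc_Suc_leftover:
  assumes "u \<in> leftover" "w \<in> leftover" "anchor u = anchor w" "u \<noteq> w"
  shows "R (Suc (Suc m)) u w"
proof -
  have "nbhd m u \<inter> core (anchor u) \<subseteq> {z\<in>V. R (Suc m) u z \<and> R (Suc m) z w}"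
  proof
    fix z assume z: "z \<in> nbhd m u \<inter> core (anchor u)"
    then have "R (Suc m) z w"
      using R_Suc_leftover_core[OF assms(2)] assms(3) R_sym by auto
    then show "z \<in> {z\<in>V. R (Suc m) u z \<and> R (Suc m) z w}"
      using z R_Suc unfolding nbhd_def by auto
  qed
  then have "real (card (nbhd m u \<inter> core (anchor u))) \<le> real (card {z\<in>V. R (Suc m) u z \<and> R (Suc m) z w})"
    using finite_V by (simp add: card_mono)
  then show ?thesis
    using anchor(2)[OF assms(1)] plateau_level assms unfolding leftover_def
    by (intro R_Suc_if_many_midpoints) auto
qed

definition part :: "'a \<Rightarrow> 'a set" where
  "part v = core v \<union> {u \<in> leftover. anchor u = v}"

lemma partition_on_parts: "partition_on V (part ` F)"
proof (rule partition_onI)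
  show "\<Union> (part ` F) = V"
  proof
    show "\<Union> (part ` F) \<subseteq> V"
      unfolding part_def leftover_def core_def by auto
    show "V \<subseteq> \<Union> (part ` F)"
    proof
      fix u assume "u \<in> V"
      show "u \<in> \<Union> (part ` F)"
      proof (cases "u \<in> leftover")
        case True
        then show ?thesis using anchor(1)[OF True] unfolding part_def by auto
      next
        case False
        then show ?thesis using \<open>u \<in> V\<close> unfolding part_def leftover_def by auto
      qed
    qed
  qed
  show "disjnt p p'" if "p \<in> part ` F" "p' \<in> part ` F" "p \<noteq> p'" for p p'
    using that core_disjoint unfolding disjnt_def part_def leftover_def by auto
  show "{} \<notin> part ` F"
    using self_in_core unfolding part_def by auto
qed

lemma card_parts_less: "card (part ` F) < c"
  using card_image_le[OF finite_F, of part] card_F_less by linarith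

lemma card_part_ge: "v \<in> F \<Longrightarrow> \<delta> / 2 * real (card V) \<le> real (card (part v))"
  using card_core_ge[of v] card_mono[of "part v" "core v"] unfolding part_def by fastforce

lemma R_in_part:
  assumes "v \<in> F" "x \<in> part v" "y \<in> part v" "x \<noteq> y"
  shows "R c x y"
proof -
  have "R (Suc (Suc m)) x y"
  proof (cases "x \<in> core v"; cases "y \<in> core v")
    assume "x \<in> core v" "y \<in> core v"
    then show ?thesis
      using R_in_core[OF assms(1)] assms(4) R_mono[of m "Suc (Suc m)"] by (metis le_SucI order_refl)
  next
    assume "x \<in> core v" "y \<notin> core v"
    then show ?thesis
      using assms R_Suc_leftover_core[of y x] R_sym R_Suc unfolding part_def by auto
  next
    assume "x \<notin> core v" "y \<in> core v"
    then show ?thesis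
      using assms R_Suc_leftover_core[of x y] R_Suc unfolding part_def by auto
  next
    assume "x \<notin> core v" "y \<notin> core v"
    then show ?thesis
      using assms R_Suc_Suc_leftover unfolding part_def by auto
  qed
  then show ?thesis
    using plateau_level R_mono[of "Suc (Suc m)" c] by simp
qed

end

theorem (in leveled_reachability) closed_partition_exists:
  "\<exists>P. partition_on V P \<and> card P < c \<and>
     (\<forall>X\<in>P. (\<forall>x\<in>X. \<forall>y\<in>X. x \<noteq> y \<longrightarrow> R c x y) \<and> \<delta> / 2 * real (card V) \<le> real (card X))"
proof -
  obtain m where m: "Suc m < c" "independence_number (Suc m) = independence_number m"
    using independence_number_stalls by blast
  obtain F where F: "independent_at (Suc m) F" "card F = independence_number m"
    using independence_number_attained[of "Suc m"] m(2) by metis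
  interpret leveled_reachability_plateau V R c \<delta> \<theta> m F
    using m(1) F by unfold_locales
  show ?thesis
    using partition_on_parts card_parts_less R_in_part card_part_ge
    by (intro exI[of _ "part ` F"]) blast
qed

section \<open>Maps with prescribed values\<close>

lemma card_PiE_fixed_on:
  assumes "finite Q" "F \<subseteq> Q" "\<And>i. i \<in> F \<Longrightarrow> h i \<in> V"
  shows "card {g \<in> Q \<rightarrow>\<^sub>E V. \<forall>i\<in>F. g i = h i} = card V ^ (card Q - card F)"
proof -
  have "{g \<in> Q \<rightarrow>\<^sub>E V. \<forall>i\<in>F. g i = h i} = Pi\<^sub>E Q (\<lambda>i. if i \<in> F then {h i} else V)"
    using assms(2,3) by (auto simp: PiE_iff extensional_def split: if_splits)
  also have "card \<dots> = (\<Prod>i\<in>Q. if i \<in> F then 1 else card V)"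
    using assms(1) by (simp add: card_PiE if_distrib cong: if_cong)
  also have "\<dots> = card V ^ card (Q - F)"
    using assms(1) by (simp add: prod.If_cases Diff_eq)
  also have "card (Q - F) = card Q - card F"
    using assms(1,2) by (meson card_Diff_subset finite_subset)
  finally show ?thesis .
qed

lemma card_PiE_fixed_two:
  assumes "finite Q" "e1 \<in> Q" "e2 \<in> Q" "e1 \<noteq> e2" "x \<in> V" "y \<in> V"
  shows "card {g \<in> Q \<rightarrow>\<^sub>E V. g e1 = x \<and> g e2 = y} = card V ^ (card Q - 2)"
proof -
  have "{g \<in> Q \<rightarrow>\<^sub>E V. g e1 = x \<and> g e2 = y} =
      {g \<in> Q \<rightarrow>\<^sub>E V. \<forall>i\<in>{e1, e2}. g i = (if i = e1 then x else y)}"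
    using assms(4) by auto
  also have "card \<dots> = card V ^ (card Q - card {e1, e2})"
    using assms by (intro card_PiE_fixed_on) auto
  finally show ?thesis
    using assms(4) by (simp add: numeral_2_eq_2)
qed

text \<open>The value at \<open>p\<close> is determined by the value at \<open>p'\<close>, so forgetting it is injective.\<close>

lemma card_PiE_fixed_two_collision_at_free_le:
  assumes "finite Q" "finite V" "e1 \<in> Q" "e2 \<in> Q" "e1 \<noteq> e2" "x \<in> V" "y \<in> V"
    and p: "p \<in> Q" "p' \<in> Q" "p \<noteq> p'" "p \<noteq> e1" "p \<noteq> e2"
  shows "card {g \<in> Q \<rightarrow>\<^sub>E V. g e1 = x \<and> g e2 = y \<and> g p = g p'} \<le> card V ^ (card Q - 3)"
proof -
  let ?S = "{g \<in> Q \<rightarrow>\<^sub>E V. g e1 = x \<and> g e2 = y \<and> g p = g p'}"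
  let ?T = "{g \<in> Q - {p} \<rightarrow>\<^sub>E V. g e1 = x \<and> g e2 = y}"
  have "inj_on (\<lambda>g. restrict g (Q - {p})) ?S"
  proof (rule inj_onI)
    fix g1 g2 assume g1: "g1 \<in> ?S" and g2: "g2 \<in> ?S"
      and eq: "restrict g1 (Q - {p}) = restrict g2 (Q - {p})"
    have agree: "g1 i = g2 i" if "i \<in> Q - {p}" for i
      using fun_cong[OF eq, of i] that by simp
    moreover have "g1 p = g2 p"
      using g1 g2 agree[of p'] p by simp
    ultimately have "g1 i = g2 i" if "i \<in> Q" for i
      using that by (cases "i = p") auto
    then show "g1 = g2"
      using g1 g2 by (intro PiE_ext[of _ Q "\<lambda>_. V"]) auto
  qed
  moreover have "(\<lambda>g. restrict g (Q - {p})) ` ?S \<subseteq> ?T"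
    using p assms by (auto simp: PiE_iff split: if_splits)
  ultimately have "card ?S \<le> card ?T"
    using assms(1,2) by (intro card_inj_on_le) (auto simp: finite_PiE)
  also have "card ?T = card V ^ (card (Q - {p}) - 2)"
    using assms by (intro card_PiE_fixed_two) auto
  also have "card (Q - {p}) - 2 = card Q - 3"
    using p assms(1) by simp
  finally show ?thesis .
qed

lemma card_PiE_fixed_two_collision_le:
  assumes "finite Q" "finite V" "e1 \<in> Q" "e2 \<in> Q" "e1 \<noteq> e2" "x \<in> V" "y \<in> V" "x \<noteq> y"
    and "p \<in> Q" "p' \<in> Q" "p \<noteq> p'"
  shows "card {g \<in> Q \<rightarrow>\<^sub>E V. g e1 = x \<and> g e2 = y \<and> g p = g p'} \<le> card V ^ (card Q - 3)"
proof -
  consider "p \<noteq> e1 \<and> p \<noteq> e2" | "p' \<noteq> e1 \<and> p' \<noteq> e2" | "p \<in> {e1, e2}" "p' \<in> {e1, e2}"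
    by auto
  then show ?thesis
  proof cases
    case 1
    then show ?thesis
      using assms by (intro card_PiE_fixed_two_collision_at_free_le) auto
  next
    case 2
    then show ?thesis
      using assms card_PiE_fixed_two_collision_at_free_le[of Q V e1 e2 x y p' p] by (simp add: eq_commute)
  next
    case 3
    then have "{g \<in> Q \<rightarrow>\<^sub>E V. g e1 = x \<and> g e2 = y \<and> g p = g p'} = {}"
      using assms(5,8,11) by auto
    then show ?thesis
      by (metis card.empty le0)
  qed
qed

lemma card_PiE_fixed_two_not_inj_le:
  assumes "finite Q" "finite V" "e1 \<in> Q" "e2 \<in> Q" "e1 \<noteq> e2" "x \<in> V" "y \<in> V" "x \<noteq> y"
  shows "card {g \<in> Q \<rightarrow>\<^sub>E V. g e1 = x \<and> g e2 = y \<and> \<not> inj_on g Q} \<le> card Q ^ 2 * card V ^ (card Q - 3)"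
proof -
  let ?D = "{pp \<in> Q \<times> Q. fst pp \<noteq> snd pp}"
  let ?S = "\<lambda>pp. {g \<in> Q \<rightarrow>\<^sub>E V. g e1 = x \<and> g e2 = y \<and> g (fst pp) = g (snd pp)}"
  have "{g \<in> Q \<rightarrow>\<^sub>E V. g e1 = x \<and> g e2 = y \<and> \<not> inj_on g Q} \<subseteq> (\<Union>pp\<in>?D. ?S pp)"
  proof
    fix g assume "g \<in> {g \<in> Q \<rightarrow>\<^sub>E V. g e1 = x \<and> g e2 = y \<and> \<not> inj_on g Q}"
    moreover from this obtain p p' where "p \<in> Q" "p' \<in> Q" "g p = g p'" "p \<noteq> p'"
      unfolding inj_on_def by auto
    ultimately show "g \<in> (\<Union>pp\<in>?D. ?S pp)"
      by (intro UN_I[of "(p, p')"]) auto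
  qed
  then have "card {g \<in> Q \<rightarrow>\<^sub>E V. g e1 = x \<and> g e2 = y \<and> \<not> inj_on g Q} \<le> (\<Sum>pp\<in>?D. card (?S pp))"
    using real_card_le_sum_card_UN[of ?D ?S] assms(1,2)
    by (simp add: finite_PiE flip: of_nat_sum)
  also have "\<dots> \<le> (\<Sum>pp\<in>?D. card V ^ (card Q - 3))"
    using assms by (intro sum_mono card_PiE_fixed_two_collision_le) auto
  also have "\<dots> = card ?D * card V ^ (card Q - 3)"
    by simp
  also have "\<dots> \<le> card (Q \<times> Q) * card V ^ (card Q - 3)"
    using assms(1) by (intro mult_right_mono card_mono) auto
  finally show ?thesis
    by (simp add: card_cartesian_product power2_eq_square)
qed

lemma card_le_card_inj_plus_collisions:
  assumes "finite Q" "finite V" "e1 \<in> Q" "e2 \<in> Q" "e1 \<noteq> e2" "x \<in> V" "y \<in> V" "x \<noteq> y"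
    and "T \<subseteq> {g \<in> Q \<rightarrow>\<^sub>E V. g e1 = x \<and> g e2 = y}" and "\<And>g. g \<in> T \<Longrightarrow> inj_on g Q \<Longrightarrow> g \<in> X"
    and "finite X"
  shows "real (card T) \<le> real (card X) + real (card Q) ^ 2 * real (card V) ^ (card Q - 3)"
proof -
  let ?N = "{g \<in> Q \<rightarrow>\<^sub>E V. g e1 = x \<and> g e2 = y \<and> \<not> inj_on g Q}"
  have "card T \<le> card (X \<union> ?N)"
    using assms by (intro card_mono) (auto simp: finite_PiE)
  also have "\<dots> \<le> card X + card ?N"
    by (rule card_Un_le)
  also have "\<dots> \<le> card X + card Q ^ 2 * card V ^ (card Q - 3)"
    using card_PiE_fixed_two_not_inj_le[OF assms(1-8)] by simp
  finally show ?thesis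
    by (simp flip: of_nat_power of_nat_mult of_nat_add)
qed

section \<open>Paths of copies of \<open>K\<^sub>k\<^sub>,\<^sub>q\<^sub>+\<^sub>1\<close>\<close>

lemma J_in_path_verts [simp]: "J j \<in> path_verts k q s \<longleftrightarrow> j \<le> s"
  and A_in_path_verts [simp]: "A i a \<in> path_verts k q s \<longleftrightarrow> i < s \<and> a < k"
  and B_in_path_verts [simp]: "B i b \<in> path_verts k q s \<longleftrightarrow> i < s \<and> b < q - 1"
  unfolding path_verts_def by auto

lemma path_verts_eq_images:
  "path_verts k q s = J ` {..s} \<union> case_prod A ` ({..<s} \<times> {..<k}) \<union> case_prod B ` ({..<s} \<times> {..<q - 1})"
  unfolding path_verts_def by auto

lemma finite_path_verts [simp]: "finite (path_verts k q s)"
  unfolding path_verts_eq_images by auto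

lemma card_path_verts:
  assumes "1 \<le> q" shows "card (path_verts k q s) = s * (k + q) + 1"
proof -
  have "inj_on J {..s}" "inj_on (case_prod A) ({..<s} \<times> {..<k})" "inj_on (case_prod B) ({..<s} \<times> {..<q - 1})"
    by (auto simp: inj_on_def)
  then have "card (path_verts k q s) = Suc s + s * k + s * (q - 1)"
    unfolding path_verts_eq_images
    by (subst card_Un_disjoint, auto)+ (auto simp: card_image card_cartesian_product)
  with assms show ?thesis
    by (cases q) (auto simp: algebra_simps)
qed

definition directed_path_embeddings ::
  "nat \<Rightarrow> nat \<Rightarrow> nat \<Rightarrow> 'a set \<Rightarrow> ('a \<Rightarrow> 'a \<Rightarrow> bool) \<Rightarrow> 'a \<Rightarrow> 'a \<Rightarrow> (pvert \<Rightarrow> 'a) set" where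
  "directed_path_embeddings k q s V E x y = {f \<in> path_embeddings k q s V E x y. f (J 0) = x \<and> f (J s) = y}"

lemma directed_path_embeddings_iff:
  "f \<in> directed_path_embeddings k q s V E x y \<longleftrightarrow>
     f \<in> path_verts k q s \<rightarrow>\<^sub>E V \<and> inj_on f (path_verts k q s) \<and>
     (\<forall>u\<in>path_verts k q s. \<forall>v\<in>path_verts k q s. path_edge u v \<longrightarrow> E (f u) (f v)) \<and>
     f (J 0) = x \<and> f (J s) = y"
  unfolding directed_path_embeddings_def path_embeddings_def by auto

lemma path_embeddings_eq_Un:
  "path_embeddings k q s V E x y = directed_path_embeddings k q s V E x y \<union> directed_path_embeddings k q s V E y x"
  unfolding directed_path_embeddings_def path_embeddings_def by (auto simp: doubleton_eq_iff)

lemma finite_directed_path_embeddings: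
  "finite V \<Longrightarrow> finite (directed_path_embeddings k q s V E x y)"
  by (rule finite_subset[of _ "path_verts k q s \<rightarrow>\<^sub>E V"])
     (auto simp: directed_path_embeddings_iff finite_PiE)

lemma card_directed_le_path_embeddings:
  "finite V \<Longrightarrow> card (directed_path_embeddings k q s V E x y) \<le> card (path_embeddings k q s V E x y)"
  unfolding path_embeddings_eq_Un by (intro card_mono) (auto simp: finite_directed_path_embeddings)

definition path_reverse :: "nat \<Rightarrow> pvert \<Rightarrow> pvert" where
  "path_reverse s p = (case p of J j \<Rightarrow> J (s - j) | A i a \<Rightarrow> A (s - Suc i) a | B i b \<Rightarrow> B (s - Suc i) b)"

lemma path_reverse_in: "p \<in> path_verts k q s \<Longrightarrow> path_reverse s p \<in> path_verts k q s"
  unfolding path_reverse_def by (cases p) auto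

lemma path_reverse_involution: "p \<in> path_verts k q s \<Longrightarrow> path_reverse s (path_reverse s p) = p"
  unfolding path_reverse_def by (cases p) auto

lemma path_edge_dir_reverse:
  assumes "u \<in> path_verts k q s" "path_edge_dir u v"
  shows "path_edge_dir (path_reverse s u) (path_reverse s v)"
proof -
  obtain i a where u: "u = A i a" and v: "v = J i \<or> v = J (Suc i) \<or> (\<exists>b. v = B i b)"
    using assms(2) unfolding path_edge_dir_def by blast
  have "s - i = Suc (s - Suc i)"
    using assms(1) u by (simp add: Suc_diff_Suc)
  with v show ?thesis
    unfolding u path_edge_dir_def path_reverse_def by auto
qed

lemma path_edge_reverse:
  "u \<in> path_verts k q s \<Longrightarrow> v \<in> path_verts k q s \<Longrightarrow> path_edge u v \<Longrightarrow>
     path_edge (path_reverse s u) (path_reverse s v)"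
  unfolding path_edge_def using path_edge_dir_reverse by blast

lemma card_directed_path_embeddings_swap_le:
  assumes "finite V"
  shows "card (directed_path_embeddings k q s V E x y) \<le> card (directed_path_embeddings k q s V E y x)"
proof -
  let ?P = "path_verts k q s"
  let ?rev = "\<lambda>f. restrict (f \<circ> path_reverse s) ?P"
  have "inj_on ?rev (directed_path_embeddings k q s V E x y)"
  proof (rule inj_onI)
    fix f g assume f: "f \<in> directed_path_embeddings k q s V E x y"
      and g: "g \<in> directed_path_embeddings k q s V E x y" and eq: "?rev f = ?rev g"
    have "f p = g p" if "p \<in> ?P" for p
      using fun_cong[OF eq, of "path_reverse s p"] that path_reverse_in path_reverse_involution by simp
    with f g show "f = g"
      by (intro PiE_ext[of _ ?P "\<lambda>_. V"]) (auto simp: directed_path_embeddings_iff)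
  qed
  moreover have "?rev ` directed_path_embeddings k q s V E x y \<subseteq> directed_path_embeddings k q s V E y x"
  proof
    fix h assume "h \<in> ?rev ` directed_path_embeddings k q s V E x y"
    then obtain f where f: "f \<in> directed_path_embeddings k q s V E x y" and h: "h = ?rev f"
      by blast
    have "inj_on h ?P"
    proof (rule inj_onI)
      fix u v assume "u \<in> ?P" "v \<in> ?P" "h u = h v"
      then have "path_reverse s u = path_reverse s v"
        using f path_reverse_in unfolding h directed_path_embeddings_iff by (auto dest: inj_onD)
      then show "u = v"
        using path_reverse_involution \<open>u \<in> ?P\<close> \<open>v \<in> ?P\<close> by metis
    qed
    then show "h \<in> directed_path_embeddings k q s V E y x"
      using f path_reverse_in path_edge_reverse
      unfolding h directed_path_embeddings_iff by (auto simp: path_reverse_def)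
  qed
  ultimately show ?thesis
    using assms by (intro card_inj_on_le) (auto simp: finite_directed_path_embeddings)
qed

lemma card_path_embeddings_le_twice:
  assumes "finite V"
  shows "card (path_embeddings k q s V E x y) \<le> 2 * card (directed_path_embeddings k q s V E x y)"
proof -
  have "card (path_embeddings k q s V E x y) \<le>
      card (directed_path_embeddings k q s V E x y) + card (directed_path_embeddings k q s V E y x)"
    unfolding path_embeddings_eq_Un by (rule card_Un_le)
  then show ?thesis
    using card_directed_path_embeddings_swap_le[OF assms, of k q s E y x] by simp
qed

definition path_shift :: "nat \<Rightarrow> pvert \<Rightarrow> pvert" where
  "path_shift s1 p = (case p of J j \<Rightarrow> J (s1 + j) | A i a \<Rightarrow> A (s1 + i) a | B i b \<Rightarrow> B (s1 + i) b)"

definition path_glue :: "nat \<Rightarrow> (pvert \<Rightarrow> 'a) \<Rightarrow> (pvert \<Rightarrow> 'a) \<Rightarrow> pvert \<Rightarrow> 'a" where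
  "path_glue s1 f1 f2 p = (case p of
       J j \<Rightarrow> if j \<le> s1 then f1 (J j) else f2 (J (j - s1))
     | A i a \<Rightarrow> if i < s1 then f1 (A i a) else f2 (A (i - s1) a)
     | B i b \<Rightarrow> if i < s1 then f1 (B i b) else f2 (B (i - s1) b))"

lemma in_path_verts_add: "p \<in> path_verts k q s1 \<Longrightarrow> p \<in> path_verts k q (s1 + s2)"
  by (cases p) auto

lemma path_shift_in: "p \<in> path_verts k q s2 \<Longrightarrow> path_shift s1 p \<in> path_verts k q (s1 + s2)"
  unfolding path_shift_def by (cases p) auto

lemma path_glue_left: "p \<in> path_verts k q s1 \<Longrightarrow> path_glue s1 f1 f2 p = f1 p"
  unfolding path_glue_def by (cases p) auto

lemma path_glue_right:
  "f1 (J s1) = f2 (J 0) \<Longrightarrow> p \<in> path_verts k q s2 \<Longrightarrow> path_glue s1 f1 f2 (path_shift s1 p) = f2 p"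
  unfolding path_glue_def path_shift_def by (cases p) auto

lemma path_verts_add_cases:
  assumes "p \<in> path_verts k q (s1 + s2)"
  shows "p \<in> path_verts k q s1 \<or> (\<exists>p'\<in>path_verts k q s2. p = path_shift s1 p')"
proof (cases p)
  case (J j)
  then show ?thesis using assms
    by (cases "j \<le> s1") (auto simp: path_shift_def intro!: bexI[of _ "J (j - s1)"])
next
  case (A i a)
  then show ?thesis using assms
    by (cases "i < s1") (auto simp: path_shift_def intro!: bexI[of _ "A (i - s1) a"])
next
  case (B i b)
  then show ?thesis using assms
    by (cases "i < s1") (auto simp: path_shift_def intro!: bexI[of _ "B (i - s1) b"])
qed

lemma path_edge_dir_add_cases:
  assumes "u \<in> path_verts k q (s1 + s2)" "v \<in> path_verts k q (s1 + s2)" "path_edge_dir u v"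
  shows "u \<in> path_verts k q s1 \<and> v \<in> path_verts k q s1 \<or>
    (\<exists>u'\<in>path_verts k q s2. \<exists>v'\<in>path_verts k q s2.
       u = path_shift s1 u' \<and> v = path_shift s1 v' \<and> path_edge_dir u' v')"
proof -
  obtain i a where u: "u = A i a" and v: "v = J i \<or> v = J (Suc i) \<or> (\<exists>b. v = B i b)"
    using assms(3) unfolding path_edge_dir_def by blast
  show ?thesis
  proof (cases "i < s1")
    case True
    then show ?thesis using assms u v by auto
  next
    case False
    then obtain i' where i': "i = s1 + i'"
      using le_Suc_ex not_less by blast
    have "A i' a \<in> path_verts k q s2" "u = path_shift s1 (A i' a)"
      using assms(1) u i' by (auto simp: path_shift_def)
    moreover have "\<exists>v'\<in>path_verts k q s2. v = path_shift s1 v' \<and> path_edge_dir (A i' a) v'"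
      using v assms(2) i'
      by (elim disjE exE)
         (auto simp: path_shift_def path_edge_dir_def intro: bexI[of _ "J i'"] bexI[of _ "J (Suc i')"]
           bexI[of _ "B i' b" for b])
    ultimately show ?thesis by blast
  qed
qed

lemma path_edge_add_cases:
  assumes "u \<in> path_verts k q (s1 + s2)" "v \<in> path_verts k q (s1 + s2)" "path_edge u v"
  shows "u \<in> path_verts k q s1 \<and> v \<in> path_verts k q s1 \<or>
    (\<exists>u'\<in>path_verts k q s2. \<exists>v'\<in>path_verts k q s2.
       u = path_shift s1 u' \<and> v = path_shift s1 v' \<and> path_edge u' v')"
  using assms path_edge_dir_add_cases[of u k q s1 s2 v] path_edge_dir_add_cases[of v k q s1 s2 u]
  unfolding path_edge_def by blast

lemma path_glue_hom:
  assumes f1: "f1 \<in> directed_path_embeddings k q s1 V E x z"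
    and f2: "f2 \<in> directed_path_embeddings k q s2 V E z y"
  defines "g \<equiv> restrict (path_glue s1 f1 f2) (path_verts k q (s1 + s2))"
  shows "g \<in> path_verts k q (s1 + s2) \<rightarrow>\<^sub>E V" and "g (J 0) = x" and "g (J (s1 + s2)) = y"
    and "\<forall>u\<in>path_verts k q (s1 + s2). \<forall>v\<in>path_verts k q (s1 + s2). path_edge u v \<longrightarrow> E (g u) (g v)"
proof -
  let ?P1 = "path_verts k q s1" and ?P2 = "path_verts k q s2" and ?Q = "path_verts k q (s1 + s2)"
  have left: "g p = f1 p" if "p \<in> ?P1" for p
    using that path_glue_left in_path_verts_add unfolding g_def by auto
  have joint: "f1 (J s1) = f2 (J 0)"
    using f1 f2 by (simp add: directed_path_embeddings_iff)
  have right: "g (path_shift s1 p) = f2 p" if "p \<in> ?P2" for p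
    using that path_glue_right[of f1 s1 f2, OF joint] path_shift_in unfolding g_def by auto
  show "g \<in> ?Q \<rightarrow>\<^sub>E V"
  proof -
    have "g p \<in> V" if "p \<in> ?Q" for p
      using path_verts_add_cases[OF that] left right f1 f2
      by (auto simp: directed_path_embeddings_iff PiE_iff)
    then show ?thesis
      unfolding g_def by (auto simp: PiE_iff)
  qed
  show "g (J 0) = x"
    using left[of "J 0"] f1 by (simp add: directed_path_embeddings_iff)
  show "g (J (s1 + s2)) = y"
    using right[of "J s2"] f2 by (simp add: directed_path_embeddings_iff path_shift_def)
  show "\<forall>u\<in>?Q. \<forall>v\<in>?Q. path_edge u v \<longrightarrow> E (g u) (g v)"
  proof (intro ballI impI)
    fix u v assume uv: "u \<in> ?Q" "v \<in> ?Q" "path_edge u v"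
    from path_edge_add_cases[OF uv] show "E (g u) (g v)"
      using uv left right f1 f2 by (auto simp: directed_path_embeddings_iff)
  qed
qed

lemma inj_on_path_glue:
  "inj_on (\<lambda>(z, f1, f2). restrict (path_glue s1 f1 f2) (path_verts k q (s1 + s2)))
     (SIGMA z:Z. directed_path_embeddings k q s1 V E x z \<times> directed_path_embeddings k q s2 V E z y)"
proof (rule inj_onI, clarsimp)
  let ?P1 = "path_verts k q s1" and ?P2 = "path_verts k q s2" and ?Q = "path_verts k q (s1 + s2)"
  fix z f1 f2 z' f1' f2'
  assume f: "f1 \<in> directed_path_embeddings k q s1 V E x z" "f2 \<in> directed_path_embeddings k q s2 V E z y"
    and f': "f1' \<in> directed_path_embeddings k q s1 V E x z'" "f2' \<in> directed_path_embeddings k q s2 V E z' y"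
    and eq: "restrict (path_glue s1 f1 f2) ?Q = restrict (path_glue s1 f1' f2') ?Q"
  have "f1 p = f1' p" if "p \<in> ?P1" for p
    using fun_cong[OF eq, of p] that path_glue_left[of p k q s1 f1 f2] path_glue_left[of p k q s1 f1' f2']
      in_path_verts_add[of p k q s1 s2]
    by simp
  then have f1_eq: "f1 = f1'"
    using f(1) f'(1) by (intro PiE_ext[of _ ?P1 "\<lambda>_. V"]) (auto simp: directed_path_embeddings_iff)
  then have z_eq: "z = z'"
    using f(1) f'(1) by (simp add: directed_path_embeddings_iff)
  have "f2 p = f2' p" if "p \<in> ?P2" for p
    using fun_cong[OF eq, of "path_shift s1 p"] that path_shift_in f f'
      path_glue_right[of f1 s1 f2] path_glue_right[of f1' s1 f2']
    by (auto simp: directed_path_embeddings_iff)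
  then have "f2 = f2'"
    using f(2) f'(2) by (intro PiE_ext[of _ ?P2 "\<lambda>_. V"]) (auto simp: directed_path_embeddings_iff)
  with f1_eq z_eq show "z = z' \<and> f1 = f1' \<and> f2 = f2'" by simp
qed

definition glued_paths ::
  "nat \<Rightarrow> nat \<Rightarrow> nat \<Rightarrow> nat \<Rightarrow> 'a set \<Rightarrow> ('a \<Rightarrow> 'a \<Rightarrow> bool) \<Rightarrow> 'a \<Rightarrow> 'a \<Rightarrow> 'a set \<Rightarrow> (pvert \<Rightarrow> 'a) set" where
  "glued_paths k q s1 s2 V E x y Z =
     (\<lambda>(z, f1, f2). restrict (path_glue s1 f1 f2) (path_verts k q (s1 + s2))) `
       (SIGMA z:Z. directed_path_embeddings k q s1 V E x z \<times> directed_path_embeddings k q s2 V E z y)"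

lemma glued_paths_hom:
  assumes "g \<in> glued_paths k q s1 s2 V E x y Z"
  shows "g \<in> path_verts k q (s1 + s2) \<rightarrow>\<^sub>E V \<and> g (J 0) = x \<and> g (J (s1 + s2)) = y \<and>
    (\<forall>u\<in>path_verts k q (s1 + s2). \<forall>v\<in>path_verts k q (s1 + s2). path_edge u v \<longrightarrow> E (g u) (g v))"
proof -
  obtain z f1 f2 where "f1 \<in> directed_path_embeddings k q s1 V E x z"
    "f2 \<in> directed_path_embeddings k q s2 V E z y" "g = restrict (path_glue s1 f1 f2) (path_verts k q (s1 + s2))"
    using assms unfolding glued_paths_def by auto
  then show ?thesis
    using path_glue_hom[of f1 k q s1 V E x z f2 s2 y] by simp
qed

lemma card_glued_paths:
  assumes "finite V" "Z \<subseteq> V"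
  shows "card (glued_paths k q s1 s2 V E x y Z) =
    (\<Sum>z\<in>Z. card (directed_path_embeddings k q s1 V E x z) * card (directed_path_embeddings k q s2 V E z y))"
proof -
  have "card (glued_paths k q s1 s2 V E x y Z) =
      card (SIGMA z:Z. directed_path_embeddings k q s1 V E x z \<times> directed_path_embeddings k q s2 V E z y)"
    unfolding glued_paths_def using inj_on_path_glue by (rule card_image)
  also have "\<dots> = (\<Sum>z\<in>Z. card (directed_path_embeddings k q s1 V E x z) * card (directed_path_embeddings k q s2 V E z y))"
    using assms finite_subset[OF assms(2)]
    by (subst card_SigmaI) (auto simp: finite_directed_path_embeddings card_cartesian_product)
  finally show ?thesis .
qed

lemma path_length_exponents:
  assumes "1 \<le> q" "1 \<le> s1" "1 \<le> s2"
  shows "(s1 + s2) * (k + q) - 1 = (s1 * (k + q) - 1) + (s2 * (k + q) - 1) + 1"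
    and "card (path_verts k q (s1 + s2)) = ((s1 + s2) * (k + q) - 1) + 2"
proof -
  have "1 \<le> s1 * (k + q)" "1 \<le> s2 * (k + q)"
    using assms by (simp_all add: Suc_le_eq)
  then show "(s1 + s2) * (k + q) - 1 = (s1 * (k + q) - 1) + (s2 * (k + q) - 1) + 1"
    and "card (path_verts k q (s1 + s2)) = ((s1 + s2) * (k + q) - 1) + 2"
    unfolding card_path_verts[OF assms(1)] add_mult_distrib by linarith+
qed

lemma card_glued_paths_ge:
  fixes b \<theta> :: real
  assumes fin: "finite V" and q: "1 \<le> q" and s: "1 \<le> s1" "1 \<le> s2"
    and Z: "Z \<subseteq> V" "\<theta> * real (card V) \<le> real (card Z)"
    and lb1: "\<And>z. z \<in> Z \<Longrightarrow> b * real (card V) ^ (s1 * (k + q) - 1) \<le> real (card (directed_path_embeddings k q s1 V E x z))"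
    and lb2: "\<And>z. z \<in> Z \<Longrightarrow> b * real (card V) ^ (s2 * (k + q) - 1) \<le> real (card (directed_path_embeddings k q s2 V E z y))"
    and nonneg: "0 \<le> b" "0 \<le> \<theta>"
  shows "\<theta> * b ^ 2 * real (card V) ^ ((s1 + s2) * (k + q) - 1) \<le> real (card (glued_paths k q s1 s2 V E x y Z))"
proof -
  let ?n = "real (card V)"
  define N1 N2 N where "N1 = s1 * (k + q) - 1" and "N2 = s2 * (k + q) - 1"
    and "N = (s1 + s2) * (k + q) - 1"
  have N: "N = N1 + N2 + 1"
    using path_length_exponents(1)[OF q s] unfolding N1_def N2_def N_def .
  have "\<theta> * ?n * b ^ 2 * ?n ^ (N1 + N2) \<le> real (card Z) * b ^ 2 * ?n ^ (N1 + N2)"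
    using Z(2) nonneg by (intro mult_right_mono) auto
  also have "\<dots> = (\<Sum>z\<in>Z. (b * ?n ^ N1) * (b * ?n ^ N2))"
    by (simp add: power_add power2_eq_square algebra_simps)
  also have "\<dots> \<le> real (card (glued_paths k q s1 s2 V E x y Z))"
    unfolding card_glued_paths[OF fin Z(1)] using lb1 lb2 nonneg unfolding N1_def N2_def
    by (simp only: of_nat_sum of_nat_mult) (intro sum_mono mult_mono, auto)
  finally have "\<theta> * b ^ 2 * ?n ^ N \<le> real (card (glued_paths k q s1 s2 V E x y Z))"
    unfolding N by (simp add: algebra_simps)
  then show ?thesis
    unfolding N_def .
qed

text \<open>There are at least \<open>\<theta>b\<^sup>2n\<^bsup>|Q|-2\<^esup>\<close> glued paths, where \<open>Q\<close> is the vertex set of the longer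
  path, and all but \<open>|Q|\<^sup>2n\<^bsup>|Q|-3\<^esup>\<close> of them are injective.\<close>

lemma card_directed_path_embeddings_add_ge:
  fixes b \<theta> :: real
  assumes fin: "finite V" and xy: "x \<in> V" "y \<in> V" "x \<noteq> y" and q: "1 \<le> q"
    and s: "1 \<le> s1" "1 \<le> s2" and Z: "Z \<subseteq> V" "\<theta> * real (card V) \<le> real (card Z)"
    and lb1: "\<And>z. z \<in> Z \<Longrightarrow> b * real (card V) ^ (s1 * (k + q) - 1) \<le> real (card (directed_path_embeddings k q s1 V E x z))"
    and lb2: "\<And>z. z \<in> Z \<Longrightarrow> b * real (card V) ^ (s2 * (k + q) - 1) \<le> real (card (directed_path_embeddings k q s2 V E z y))"
    and nonneg: "0 \<le> b" "0 \<le> \<theta>"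
    and n_large: "real (card (path_verts k q (s1 + s2))) ^ 2 \<le> \<theta> * b ^ 2 / 2 * real (card V)"
  shows "\<theta> * b ^ 2 / 2 * real (card V) ^ ((s1 + s2) * (k + q) - 1)
    \<le> real (card (directed_path_embeddings k q (s1 + s2) V E x y))"
proof -
  let ?n = "real (card V)" and ?Q = "path_verts k q (s1 + s2)"
  define N where "N = (s1 + s2) * (k + q) - 1"
  have "real (card (glued_paths k q s1 s2 V E x y Z)) \<le> real (card (directed_path_embeddings k q (s1 + s2) V E x y))
      + real (card ?Q) ^ 2 * ?n ^ (card ?Q - 3)"
  proof (rule card_le_card_inj_plus_collisions[OF _ fin _ _ _ xy])
    show "glued_paths k q s1 s2 V E x y Z \<subseteq> {g \<in> ?Q \<rightarrow>\<^sub>E V. g (J 0) = x \<and> g (J (s1 + s2)) = y}"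
    proof
      fix g assume "g \<in> glued_paths k q s1 s2 V E x y Z"
      from glued_paths_hom[OF this] show "g \<in> {g \<in> ?Q \<rightarrow>\<^sub>E V. g (J 0) = x \<and> g (J (s1 + s2)) = y}"
        by simp
    qed
    show "g \<in> directed_path_embeddings k q (s1 + s2) V E x y"
      if "g \<in> glued_paths k q s1 s2 V E x y Z" "inj_on g ?Q" for g
      using glued_paths_hom[OF that(1)] that(2) unfolding directed_path_embeddings_iff by simp
  qed (use s finite_directed_path_embeddings[OF fin] in auto)
  moreover have "real (card ?Q) ^ 2 * ?n ^ (card ?Q - 3) \<le> \<theta> * b ^ 2 / 2 * ?n ^ N"
  proof -
    have "real (card ?Q) ^ 2 * ?n ^ (card ?Q - 3) \<le> \<theta> * b ^ 2 / 2 * ?n * ?n ^ (card ?Q - 3)"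
      using n_large by (intro mult_right_mono) auto
    also have "\<dots> = \<theta> * b ^ 2 / 2 * ?n ^ N"
    proof -
      have "N = Suc (card ?Q - 3)"
        using path_length_exponents[OF q s, of k] unfolding N_def by linarith
      then show ?thesis
        by (simp add: algebra_simps)
    qed
    finally show ?thesis .
  qed
  moreover have "\<theta> * b ^ 2 * ?n ^ N \<le> real (card (glued_paths k q s1 s2 V E x y Z))"
    unfolding N_def by (rule card_glued_paths_ge[OF fin q s Z lb1 lb2 nonneg])
  moreover have "\<theta> * b ^ 2 / 2 * ?n ^ N = \<theta> * b ^ 2 * ?n ^ N / 2"
    by simp
  ultimately show ?thesis
    unfolding N_def by linarith
qed

section \<open>Counting single copies\<close>

lemma sum_card_filter_swap:
  assumes "finite S" "finite T"
  shows "(\<Sum>a\<in>S. real (card {b\<in>T. P a b})) = (\<Sum>b\<in>T. real (card {a\<in>S. P a b}))"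
proof -
  have "(\<Sum>a\<in>S. real (card {b\<in>T. P a b})) = (\<Sum>a\<in>S. \<Sum>b\<in>T. if P a b then 1 else 0)"
    using sum.inter_filter[OF assms(2), of "\<lambda>_. 1::real"] by simp
  also have "\<dots> = (\<Sum>b\<in>T. \<Sum>a\<in>S. if P a b then 1 else 0)"
    by (rule sum.swap)
  also have "\<dots> = (\<Sum>b\<in>T. real (card {a\<in>S. P a b}))"
    using sum.inter_filter[OF assms(1), of "\<lambda>_. 1::real"] by simp
  finally show ?thesis .
qed

lemma card_mult_mean_power_le:
  fixes f :: "'b \<Rightarrow> real"
  assumes "finite I" "I \<noteq> {}" "\<And>i. i \<in> I \<Longrightarrow> 0 \<le> f i"
  shows "real (card I) * ((\<Sum>i\<in>I. f i) / real (card I)) ^ m \<le> (\<Sum>i\<in>I. f i ^ m)"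
proof -
  have "convex_on {0::real..} (\<lambda>x. x ^ m)"
    using convex_on_subset[OF convex_power_even, of m "{0..}"] convex_power_odd[of m] by auto
  moreover have card_pos: "0 < real (card I)"
    using assms by auto
  ultimately have "(\<Sum>i\<in>I. (1 / real (card I)) *\<^sub>R f i) ^ m \<le> (\<Sum>i\<in>I. (1 / real (card I)) * f i ^ m)"
    using assms by (intro convex_on_sum[OF assms(1,2)]) auto
  then have "((\<Sum>i\<in>I. f i) / real (card I)) ^ m \<le> (\<Sum>i\<in>I. f i ^ m) / real (card I)"
    by (simp add: sum_divide_distrib)
  then show ?thesis
    using card_pos by (simp add: field_simps)
qed

lemma sum_card_common_nbhd_ge:
  fixes \<gamma> :: real
  assumes G: "is_graph V E" and deg: "\<And>v. v \<in> V \<Longrightarrow> \<gamma> * real (card V) \<le> real (card {u\<in>V. E v u})"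
    and "0 \<le> \<gamma>" "W \<subseteq> V" "V \<noteq> {}" "finite I"
  shows "real (card V) * (real (card W) * \<gamma>) ^ card I \<le> (\<Sum>g\<in>I \<rightarrow>\<^sub>E W. real (card {v\<in>V. \<forall>i\<in>I. E (g i) v}))"
proof -
  let ?n = "real (card V)"
  define d where "d v = real (card {w\<in>W. E w v})" for v
  have fin: "finite V" "finite W"
    using G assms(4) finite_subset unfolding is_graph_def by auto
  have "(\<Sum>g\<in>I \<rightarrow>\<^sub>E W. real (card {v\<in>V. \<forall>i\<in>I. E (g i) v})) = (\<Sum>v\<in>V. real (card {g\<in>I \<rightarrow>\<^sub>E W. \<forall>i\<in>I. E (g i) v}))"
    using fin assms(6) by (intro sum_card_filter_swap) (auto simp: finite_PiE)
  also have "\<dots> = (\<Sum>v\<in>V. d v ^ card I)"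
  proof (rule sum.cong[OF refl])
    fix v
    have "{g\<in>I \<rightarrow>\<^sub>E W. \<forall>i\<in>I. E (g i) v} = I \<rightarrow>\<^sub>E {w\<in>W. E w v}"
      by (auto simp: PiE_iff extensional_def)
    then show "real (card {g\<in>I \<rightarrow>\<^sub>E W. \<forall>i\<in>I. E (g i) v}) = d v ^ card I"
      using assms(6) by (simp add: card_PiE d_def)
  qed
  finally have sum_eq: "(\<Sum>g\<in>I \<rightarrow>\<^sub>E W. real (card {v\<in>V. \<forall>i\<in>I. E (g i) v})) = (\<Sum>v\<in>V. d v ^ card I)" .
  have "real (card W) * (\<gamma> * ?n) \<le> (\<Sum>w\<in>W. real (card {v\<in>V. E w v}))"
    using deg assms(4) sum_bounded_below[of W "\<gamma> * ?n" "\<lambda>w. real (card {v\<in>V. E w v})"] by auto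
  also have "\<dots> = (\<Sum>v\<in>V. d v)"
    unfolding d_def using fin(2,1) by (rule sum_card_filter_swap)
  moreover have "0 < ?n"
    using assms(5) fin by (simp add: card_gt_0_iff)
  ultimately have "real (card W) * \<gamma> \<le> (\<Sum>v\<in>V. d v) / ?n"
    by (simp add: field_simps)
  then have "?n * (real (card W) * \<gamma>) ^ card I \<le> ?n * ((\<Sum>v\<in>V. d v) / ?n) ^ card I"
    using assms(3) by (intro mult_left_mono power_mono) auto
  also have "\<dots> \<le> (\<Sum>v\<in>V. d v ^ card I)"
    using fin(1) assms(5) by (intro card_mult_mean_power_le) (auto simp: d_def)
  finally show ?thesis
    unfolding sum_eq .
qed

lemma sum_card_common_nbhd_power_ge:
  fixes \<gamma> :: real
  assumes G: "is_graph V E" and deg: "\<And>v. v \<in> V \<Longrightarrow> \<gamma> * real (card V) \<le> real (card {u\<in>V. E v u})"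
    and "0 \<le> \<gamma>" "W \<subseteq> V" "W \<noteq> {}" "finite I"
  shows "real (card W) ^ card I * (real (card V) * \<gamma> ^ card I) ^ j
    \<le> (\<Sum>g\<in>I \<rightarrow>\<^sub>E W. real (card {v\<in>V. \<forall>i\<in>I. E (g i) v}) ^ j)"
proof -
  let ?n = "real (card V)" and ?C = "\<lambda>g. real (card {v\<in>V. \<forall>i\<in>I. E (g i) v})"
  have fin: "finite W"
    using G assms(4) finite_subset unfolding is_graph_def by auto
  have card_PA: "real (card (I \<rightarrow>\<^sub>E W)) = real (card W) ^ card I"
    using assms(6) by (simp add: card_PiE)
  have PA: "finite (I \<rightarrow>\<^sub>E W)" "I \<rightarrow>\<^sub>E W \<noteq> {}" "0 < real (card (I \<rightarrow>\<^sub>E W))"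
    using fin assms(5,6) by (auto simp: finite_PiE PiE_eq_empty_iff card_gt_0_iff)
  have "?n * \<gamma> ^ card I * real (card (I \<rightarrow>\<^sub>E W)) = ?n * (real (card W) * \<gamma>) ^ card I"
    unfolding card_PA by (simp add: power_mult_distrib)
  also have "\<dots> \<le> (\<Sum>g\<in>I \<rightarrow>\<^sub>E W. ?C g)"
    using assms by (intro sum_card_common_nbhd_ge) auto
  finally have "?n * \<gamma> ^ card I \<le> (\<Sum>g\<in>I \<rightarrow>\<^sub>E W. ?C g) / real (card (I \<rightarrow>\<^sub>E W))"
    using PA(3) by (simp add: field_simps)
  then have "real (card (I \<rightarrow>\<^sub>E W)) * (?n * \<gamma> ^ card I) ^ j
      \<le> real (card (I \<rightarrow>\<^sub>E W)) * ((\<Sum>g\<in>I \<rightarrow>\<^sub>E W. ?C g) / real (card (I \<rightarrow>\<^sub>E W))) ^ j"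
    using assms(3) PA(3) by (intro mult_left_mono power_mono) auto
  also have "\<dots> \<le> (\<Sum>g\<in>I \<rightarrow>\<^sub>E W. ?C g ^ j)"
    using PA by (intro card_mult_mean_power_le) auto
  finally show ?thesis
    unfolding card_PA .
qed

definition one_copy_map :: "'a \<Rightarrow> 'a \<Rightarrow> (nat \<Rightarrow> 'a) \<Rightarrow> (nat \<Rightarrow> 'a) \<Rightarrow> pvert \<Rightarrow> 'a" where
  "one_copy_map x y g h p = (case p of J j \<Rightarrow> if j = 0 then x else y | A i a \<Rightarrow> g a | B i b \<Rightarrow> h b)"

lemma path_verts_one_cases:
  assumes "p \<in> path_verts k q 1"
  obtains "p = J 0" | "p = J 1" | a where "a < k" "p = A 0 a" | b where "b < q - 1" "p = B 0 b"
  using assms by (cases p) (auto simp: le_Suc_eq)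

lemma path_edge_one_cases:
  assumes "u \<in> path_verts k q 1" "v \<in> path_verts k q 1" "path_edge u v"
  obtains a w where "a < k" "{u, v} = {A 0 a, w}" "w = J 0 \<or> w = J 1 \<or> (\<exists>b<q - 1. w = B 0 b)"
  using assms unfolding path_edge_def path_edge_dir_def by (auto simp: less_Suc_eq doubleton_eq_iff)

lemma one_copy_map_hom:
  assumes G: "is_graph V E" and xy: "x \<in> V" "y \<in> V"
    and g: "g \<in> {..<k} \<rightarrow>\<^sub>E {w\<in>V. E x w \<and> E y w}"
    and h: "h \<in> {..<q - 1} \<rightarrow>\<^sub>E {v\<in>V. \<forall>a\<in>{..<k}. E (g a) v}"
  defines "f \<equiv> restrict (one_copy_map x y g h) (path_verts k q 1)"
  shows "f \<in> path_verts k q 1 \<rightarrow>\<^sub>E V" and "f (J 0) = x" and "f (J 1) = y"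
    and "\<forall>u\<in>path_verts k q 1. \<forall>v\<in>path_verts k q 1. path_edge u v \<longrightarrow> E (f u) (f v)"
proof -
  have E_sym: "E u v \<Longrightarrow> E v u" for u v
    using G unfolding is_graph_def by blast
  show "f \<in> path_verts k q 1 \<rightarrow>\<^sub>E V"
  proof -
    have "f p \<in> V" if "p \<in> path_verts k q 1" for p
      using that xy g h by (cases rule: path_verts_one_cases) (auto simp: f_def one_copy_map_def)
    then show ?thesis
      unfolding f_def by (auto simp: PiE_iff)
  qed
  show "f (J 0) = x" "f (J 1) = y"
    by (simp_all add: f_def one_copy_map_def)
  show "\<forall>u\<in>path_verts k q 1. \<forall>v\<in>path_verts k q 1. path_edge u v \<longrightarrow> E (f u) (f v)"
  proof (intro ballI impI)
    fix u v assume uv: "u \<in> path_verts k q 1" "v \<in> path_verts k q 1" "path_edge u v"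
    then obtain a w where a: "a < k" "{u, v} = {A 0 a, w}"
      and w: "w = J 0 \<or> w = J 1 \<or> (\<exists>b<q - 1. w = B 0 b)"
      by (rule path_edge_one_cases)
    have "E (g a) (f w) \<and> E (f w) (g a)"
      using w a(1) g h E_sym by (auto simp: f_def one_copy_map_def PiE_iff)
    moreover have "f (A 0 a) = g a"
      using a(1) by (simp add: f_def one_copy_map_def)
    ultimately show "E (f u) (f v)"
      using a(2) by (auto simp: doubleton_eq_iff)
  qed
qed

lemma inj_on_one_copy_map:
  "inj_on (\<lambda>(g, h). restrict (one_copy_map x y g h) (path_verts k q 1))
     (SIGMA g:{..<k} \<rightarrow>\<^sub>E W. {..<q - 1} \<rightarrow>\<^sub>E C g)"
proof (rule inj_onI)
  fix gh gh' assume mem: "gh \<in> (SIGMA g:{..<k} \<rightarrow>\<^sub>E W. {..<q - 1} \<rightarrow>\<^sub>E C g)"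
    "gh' \<in> (SIGMA g:{..<k} \<rightarrow>\<^sub>E W. {..<q - 1} \<rightarrow>\<^sub>E C g)"
    and eq: "(\<lambda>(g, h). restrict (one_copy_map x y g h) (path_verts k q 1)) gh =
      (\<lambda>(g, h). restrict (one_copy_map x y g h) (path_verts k q 1)) gh'"
  obtain g h g' h' where gh: "gh = (g, h)" "gh' = (g', h')"
    by fastforce
  have ext: "g \<in> extensional {..<k}" "g' \<in> extensional {..<k}"
    "h \<in> extensional {..<q - 1}" "h' \<in> extensional {..<q - 1}"
    using mem unfolding gh by (auto simp: PiE_iff)
  have "g a = g' a" if "a < k" for a
    using fun_cong[OF eq, of "A 0 a"] that unfolding gh by (simp add: one_copy_map_def)
  moreover have "h b = h' b" if "b < q - 1" for b
    using fun_cong[OF eq, of "B 0 b"] that unfolding gh by (simp add: one_copy_map_def)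
  ultimately show "gh = gh'"
    using ext unfolding gh by (auto intro: extensionalityI)
qed

definition one_copies :: "nat \<Rightarrow> nat \<Rightarrow> 'a set \<Rightarrow> ('a \<Rightarrow> 'a \<Rightarrow> bool) \<Rightarrow> 'a \<Rightarrow> 'a \<Rightarrow> (pvert \<Rightarrow> 'a) set" where
  "one_copies k q V E x y = (\<lambda>(g, h). restrict (one_copy_map x y g h) (path_verts k q 1)) `
     (SIGMA g:{..<k} \<rightarrow>\<^sub>E {w\<in>V. E x w \<and> E y w}. {..<q - 1} \<rightarrow>\<^sub>E {v\<in>V. \<forall>a\<in>{..<k}. E (g a) v})"

lemma one_copies_hom:
  assumes "is_graph V E" "x \<in> V" "y \<in> V" "f \<in> one_copies k q V E x y"
  shows "f \<in> path_verts k q 1 \<rightarrow>\<^sub>E V \<and> f (J 0) = x \<and> f (J 1) = y \<and>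
    (\<forall>u\<in>path_verts k q 1. \<forall>v\<in>path_verts k q 1. path_edge u v \<longrightarrow> E (f u) (f v))"
proof -
  obtain g h where "g \<in> {..<k} \<rightarrow>\<^sub>E {w\<in>V. E x w \<and> E y w}"
    "h \<in> {..<q - 1} \<rightarrow>\<^sub>E {v\<in>V. \<forall>a\<in>{..<k}. E (g a) v}" "f = restrict (one_copy_map x y g h) (path_verts k q 1)"
    using assms(4) unfolding one_copies_def by auto
  then show ?thesis
    using one_copy_map_hom[OF assms(1-3), of g k h q] by simp
qed

lemma card_one_copies_ge:
  fixes \<epsilon> \<gamma> :: real
  assumes G: "is_graph V E" and deg: "\<And>v. v \<in> V \<Longrightarrow> \<gamma> * real (card V) \<le> real (card {u\<in>V. E v u})"
    and x: "x \<in> V" and common: "\<epsilon> * real (card V) \<le> real (card {w\<in>V. E x w \<and> E y w})"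
    and pos: "0 < \<epsilon>" "0 \<le> \<gamma>" "1 \<le> q"
  shows "\<epsilon> ^ k * \<gamma> ^ (k * (q - 1)) * real (card V) ^ (k + q - 1) \<le> real (card (one_copies k q V E x y))"
proof -
  let ?n = "real (card V)"
  define W where "W = {w\<in>V. E x w \<and> E y w}"
  define C where "C g = {v\<in>V. \<forall>a\<in>{..<k}. E (g a) v}" for g :: "nat \<Rightarrow> 'a"
  have fin: "finite V"
    using G unfolding is_graph_def by simp
  have n_pos: "0 < ?n"
    using x fin card_gt_0_iff by fastforce
  have "0 < \<epsilon> * ?n"
    using pos(1) n_pos by simp
  then have "0 < real (card W)"
    using common unfolding W_def by linarith
  then have W_ne: "W \<noteq> {}"
    by auto
  have "k + q - 1 = k + (q - 1)"
    using pos(3) by simp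
  then have "\<epsilon> ^ k * \<gamma> ^ (k * (q - 1)) * ?n ^ (k + q - 1) = (\<epsilon> * ?n) ^ k * (?n * \<gamma> ^ k) ^ (q - 1)"
    by (simp only: power_mult_distrib power_mult power_add mult_ac)
  also have "\<dots> \<le> real (card W) ^ k * (?n * \<gamma> ^ k) ^ (q - 1)"
    using common pos n_pos unfolding W_def by (intro mult_right_mono power_mono) auto
  also have "\<dots> \<le> (\<Sum>g\<in>{..<k} \<rightarrow>\<^sub>E W. real (card (C g)) ^ (q - 1))"
    using sum_card_common_nbhd_power_ge[OF G deg pos(2) _ W_ne, of "{..<k}" "q - 1"]
    unfolding C_def W_def by simp
  also have "\<dots> = real (card (one_copies k q V E x y))"
  proof -
    have "card (one_copies k q V E x y) = card (SIGMA g:{..<k} \<rightarrow>\<^sub>E W. {..<q - 1} \<rightarrow>\<^sub>E C g)"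
      unfolding one_copies_def W_def C_def by (intro card_image inj_on_one_copy_map)
    also have "\<dots> = (\<Sum>g\<in>{..<k} \<rightarrow>\<^sub>E W. card (C g) ^ (q - 1))"
      using fin by (subst card_SigmaI) (auto simp: W_def C_def finite_PiE card_PiE)
    finally show ?thesis by simp
  qed
  finally show ?thesis .
qed

text \<open>All but \<open>(k+q+1)\<^sup>2n\<^bsup>k+q-2\<^esup>\<close> of these copies are injective.\<close>

lemma card_directed_path_embeddings_one_ge:
  fixes \<epsilon> \<gamma> :: real
  assumes G: "is_graph V E" and deg: "\<And>v. v \<in> V \<Longrightarrow> \<gamma> * real (card V) \<le> real (card {u\<in>V. E v u})"
    and xy: "x \<in> V" "y \<in> V" "x \<noteq> y"
    and common: "\<epsilon> * real (card V) \<le> real (card {w\<in>V. E x w \<and> E y w})"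
    and pos: "0 < \<epsilon>" "0 \<le> \<gamma>" "1 \<le> k" "1 \<le> q"
    and n_large: "real (k + q + 1) ^ 2 \<le> \<epsilon> ^ k * \<gamma> ^ (k * (q - 1)) / 2 * real (card V)"
  shows "\<epsilon> ^ k * \<gamma> ^ (k * (q - 1)) / 2 * real (card V) ^ (k + q - 1)
    \<le> real (card (directed_path_embeddings k q 1 V E x y))"
proof -
  let ?n = "real (card V)" and ?P = "path_verts k q 1"
  define M where "M = \<epsilon> ^ k * \<gamma> ^ (k * (q - 1)) * ?n ^ (k + q - 1)"
  have fin: "finite V"
    using G unfolding is_graph_def by simp
  have "real (card (one_copies k q V E x y))
      \<le> real (card (directed_path_embeddings k q 1 V E x y)) + real (card ?P) ^ 2 * ?n ^ (card ?P - 3)"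
  proof (rule card_le_card_inj_plus_collisions[OF _ fin _ _ _ xy])
    show "one_copies k q V E x y \<subseteq> {f \<in> ?P \<rightarrow>\<^sub>E V. f (J 0) = x \<and> f (J 1) = y}"
    proof
      fix f assume "f \<in> one_copies k q V E x y"
      from one_copies_hom[OF G xy(1,2) this] show "f \<in> {f \<in> ?P \<rightarrow>\<^sub>E V. f (J 0) = x \<and> f (J 1) = y}"
        by simp
    qed
    show "f \<in> directed_path_embeddings k q 1 V E x y" if "f \<in> one_copies k q V E x y" "inj_on f ?P" for f
      using one_copies_hom[OF G xy(1,2) that(1)] that(2) unfolding directed_path_embeddings_iff by simp
  qed (use finite_directed_path_embeddings[OF fin] in auto)
  moreover have "real (card ?P) ^ 2 * ?n ^ (card ?P - 3) \<le> M / 2"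
  proof -
    have card_P: "card ?P = k + q + 1"
      using card_path_verts[OF pos(4), of k 1] by simp
    have "real (card ?P) ^ 2 * ?n ^ (card ?P - 3) \<le> \<epsilon> ^ k * \<gamma> ^ (k * (q - 1)) / 2 * ?n * ?n ^ (card ?P - 3)"
      using n_large card_P by (intro mult_right_mono) auto
    also have "\<dots> = M / 2"
    proof -
      have "k + q - 1 = Suc (card ?P - 3)"
        using card_P pos(3,4) by simp
      then show ?thesis
        unfolding M_def by (simp add: algebra_simps)
    qed
    finally show ?thesis .
  qed
  moreover have "M \<le> real (card (one_copies k q V E x y))"
    unfolding M_def using card_one_copies_ge[OF G deg xy(1) common pos(1,2,4)] .
  ultimately have "M / 2 \<le> real (card (directed_path_embeddings k q 1 V E x y))"
    by linarith
  then show ?thesis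
    unfolding M_def by simp
qed

section \<open>Reachability in dense graphs\<close>

lemma path_reachable_commute: "path_reachable k q s \<beta> V E x y \<longleftrightarrow> path_reachable k q s \<beta> V E y x"
  unfolding path_reachable_def path_embeddings_eq_Un by (simp add: Un_commute)

lemma family_reachable_commute: "family_reachable k q t \<beta> V E x y \<longleftrightarrow> family_reachable k q t \<beta> V E y x"
  unfolding family_reachable_def using path_reachable_commute by metis

lemma family_reachable_mono:
  assumes "family_reachable k q t \<beta> V E x y" "t \<le> t'" "\<beta>' \<le> \<beta>"
  shows "family_reachable k q t' \<beta>' V E x y"
proof -
  obtain s where s: "1 \<le> s" "s \<le> 2 ^ t" "path_reachable k q s \<beta> V E x y"
    using assms(1) unfolding family_reachable_def by blast
  have "s \<le> 2 ^ t'"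
    using s(2) assms(2) power_increasing[of t t' "2::nat"] by linarith
  moreover have "path_reachable k q s \<beta>' V E x y"
    using s(3) assms(3) mult_right_mono[of \<beta>' \<beta> "real (card V) ^ (s * (k + q) - 1)"]
    unfolding path_reachable_def by simp
  ultimately show ?thesis
    unfolding family_reachable_def using s(1) by blast
qed

lemma card_directed_path_embeddings_ge_if_reachable:
  assumes "finite V" "path_reachable k q s \<beta> V E x y"
  shows "\<beta> / 2 * real (card V) ^ (s * (k + q) - 1) \<le> real (card (directed_path_embeddings k q s V E x y))"
  using assms card_path_embeddings_le_twice[OF assms(1), of k q s E x y] unfolding path_reachable_def by simp

lemma path_reachable_if_card_directed_ge:
  assumes "finite V" "\<beta> * real (card V) ^ (s * (k + q) - 1) \<le> real (card (directed_path_embeddings k q s V E x y))"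
  shows "path_reachable k q s \<beta> V E x y"
  using assms card_directed_le_path_embeddings[OF assms(1), of k q s E x y] unfolding path_reachable_def by simp

lemma family_reachable_0_if_common_nbhd:
  fixes \<epsilon> \<gamma> :: real
  assumes G: "is_graph V E" and deg: "\<And>v. v \<in> V \<Longrightarrow> \<gamma> * real (card V) \<le> real (card {u\<in>V. E v u})"
    and xy: "x \<in> V" "y \<in> V" "x \<noteq> y"
    and common: "\<epsilon> * real (card V) \<le> real (card {w\<in>V. E x w \<and> E y w})"
    and pos: "0 < \<epsilon>" "0 \<le> \<gamma>" "1 \<le> k" "1 \<le> q"
    and n_large: "real (k + q + 1) ^ 2 \<le> \<epsilon> ^ k * \<gamma> ^ (k * (q - 1)) / 2 * real (card V)"
  shows "family_reachable k q 0 (\<epsilon> ^ k * \<gamma> ^ (k * (q - 1)) / 2) V E x y"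
proof -
  have "finite V"
    using G unfolding is_graph_def by simp
  then have "path_reachable k q 1 (\<epsilon> ^ k * \<gamma> ^ (k * (q - 1)) / 2) V E x y"
    using card_directed_path_embeddings_one_ge[OF assms] by (intro path_reachable_if_card_directed_ge) simp_all
  then show ?thesis
    unfolding family_reachable_def by auto
qed

lemma exists_large_piece:
  fixes a :: real
  assumes "finite I" "I \<noteq> {}" "\<And>i. i \<in> I \<Longrightarrow> finite (C i)" "Z \<subseteq> (\<Union>i\<in>I. C i)" "a \<le> real (card Z)"
  shows "\<exists>i\<in>I. a / real (card I) \<le> real (card (C i))"
proof (rule ccontr)
  assume "\<not> ?thesis"
  then have "(\<Sum>i\<in>I. real (card (C i))) < (\<Sum>i\<in>I. a / real (card I))"
    using assms(1,2) by (intro sum_strict_mono) auto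
  also have "\<dots> = a"
    using assms(1,2) by simp
  finally show False
    using real_card_le_sum_card_UN[OF assms(1,3,4)] assms(5) by linarith
qed

text \<open>A pair \<open>x, y\<close> with many common \<open>(\<H>\<^sup>l; \<beta>)\<close>-midpoints has, by pigeonhole,
  many midpoints reached by paths of the same two lengths \<open>a, b \<le> 2\<^sup>l\<close>;
  concatenating them gives paths of length \<open>a + b \<le> 2\<^bsup>l+1\<^esup>\<close>.\<close>

lemma family_reachable_Suc_if_many_midpoints:
  fixes \<beta> \<theta> :: real
  assumes G: "is_graph V E" and q: "1 \<le> q" and xy: "x \<in> V" "y \<in> V" "x \<noteq> y"
    and pos: "0 < \<beta>" "0 < \<theta>"
    and Z: "\<theta> * real (card V) \<le> real (card {z\<in>V. family_reachable k q l \<beta> V E x z \<and> family_reachable k q l \<beta> V E z y})"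
    and n_large: "real (2 ^ Suc l * (k + q) + 1) ^ 2 \<le> \<theta> / 4 ^ l * (\<beta> / 2) ^ 2 / 2 * real (card V)"
  shows "family_reachable k q (Suc l) (\<theta> / 4 ^ l * (\<beta> / 2) ^ 2 / 2) V E x y"
proof -
  let ?n = "real (card V)"
  have fin: "finite V"
    using G unfolding is_graph_def by simp
  define I where "I = {1..(2::nat) ^ l} \<times> {1..(2::nat) ^ l}"
  define Z' where "Z' p = {z\<in>V. path_reachable k q (fst p) \<beta> V E x z \<and> path_reachable k q (snd p) \<beta> V E z y}" for p
  have midpoints: "{z\<in>V. family_reachable k q l \<beta> V E x z \<and> family_reachable k q l \<beta> V E z y}
      \<subseteq> (\<Union>p\<in>I. Z' p)"
    unfolding family_reachable_def I_def Z'_def by force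
  have "\<exists>p\<in>I. \<theta> * ?n / real (card I) \<le> real (card (Z' p))"
    by (rule exists_large_piece[OF _ _ _ midpoints Z]) (auto simp: I_def Z'_def fin)
  moreover have "real (card I) = 4 ^ l"
    unfolding I_def by (simp add: card_cartesian_product power_mult_distrib[symmetric])
  ultimately obtain a b where ab: "(a, b) \<in> I" and Zab: "\<theta> / 4 ^ l * ?n \<le> real (card (Z' (a, b)))"
    by auto
  have a: "1 \<le> a" "a \<le> 2 ^ l" and b: "1 \<le> b" "b \<le> 2 ^ l"
    using ab unfolding I_def by auto
  have "\<theta> / 4 ^ l * (\<beta> / 2) ^ 2 / 2 * ?n ^ ((a + b) * (k + q) - 1)
      \<le> real (card (directed_path_embeddings k q (a + b) V E x y))"
  proof (intro card_directed_path_embeddings_add_ge[OF fin xy q a(1) b(1) _ Zab])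
    have "card (path_verts k q (a + b)) \<le> 2 ^ Suc l * (k + q) + 1"
      using a b by (simp add: card_path_verts[OF q] add_mult_distrib[symmetric])
    then have "real (card (path_verts k q (a + b))) ^ 2 \<le> real (2 ^ Suc l * (k + q) + 1) ^ 2"
      by (intro power_mono) (simp_all only: of_nat_le_iff of_nat_0_le_iff)
    then show "real (card (path_verts k q (a + b))) ^ 2 \<le> \<theta> / 4 ^ l * (\<beta> / 2) ^ 2 / 2 * ?n"
      using n_large by linarith
  qed (use pos card_directed_path_embeddings_ge_if_reachable[OF fin] in \<open>auto simp: Z'_def\<close>)
  then have "path_reachable k q (a + b) (\<theta> / 4 ^ l * (\<beta> / 2) ^ 2 / 2) V E x y"
    by (rule path_reachable_if_card_directed_ge[OF fin])
  moreover have "a + b \<le> 2 ^ Suc l"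
    using a b by simp
  ultimately show ?thesis
    unfolding family_reachable_def using a(1) by (intro exI[of _ "a + b"]) auto
qed

lemma sum_card_common_nbhd_eq:
  assumes G: "is_graph V E"
  shows "(\<Sum>y\<in>V. real (card {w\<in>V. E x w \<and> E y w})) = (\<Sum>w\<in>{w\<in>V. E x w}. real (card {y\<in>V. E w y}))"
proof -
  have fin: "finite V"
    using G unfolding is_graph_def by simp
  have "(\<Sum>y\<in>V. real (card {w\<in>V. E x w \<and> E y w})) = (\<Sum>w\<in>V. real (card {y\<in>V. E x w \<and> E y w}))"
    by (rule sum_card_filter_swap[OF fin fin])
  also have "\<dots> = (\<Sum>w\<in>V. if E x w then real (card {y\<in>V. E w y}) else 0)"
  proof (rule sum.cong[OF refl])
    fix w
    have "{y\<in>V. E y w} = {y\<in>V. E w y}"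
      using G unfolding is_graph_def by blast
    then show "real (card {y\<in>V. E x w \<and> E y w}) = (if E x w then real (card {y\<in>V. E w y}) else 0)"
      by auto
  qed
  also have "\<dots> = (\<Sum>w\<in>{w\<in>V. E x w}. real (card {y\<in>V. E w y}))"
    using fin by (simp add: sum.inter_filter)
  finally show ?thesis .
qed

lemma many_vertices_with_many_common_nbhd:
  fixes g \<epsilon> :: real
  assumes G: "is_graph V E" and deg: "\<And>v. v \<in> V \<Longrightarrow> g * real (card V) \<le> real (card {u\<in>V. E v u})"
    and x: "x \<in> V" and nonneg: "0 \<le> g" "0 \<le> \<epsilon>"
  shows "(g ^ 2 - \<epsilon>) * real (card V) \<le> real (card {y\<in>V. \<epsilon> * real (card V) \<le> real (card {w\<in>V. E x w \<and> E y w})})"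
proof -
  let ?n = "real (card V)"
  define common where "common y = real (card {w\<in>V. E x w \<and> E y w})" for y
  define Good where "Good = {y\<in>V. \<epsilon> * ?n \<le> common y}"
  have fin: "finite V"
    using G unfolding is_graph_def by simp
  have n_pos: "0 < ?n"
    using x fin card_gt_0_iff by fastforce
  have "(\<Sum>y\<in>V. common y) = (\<Sum>w\<in>{w\<in>V. E x w}. real (card {y\<in>V. E w y}))"
    unfolding common_def by (rule sum_card_common_nbhd_eq[OF G])
  also have "\<dots> \<ge> real (card {w\<in>V. E x w}) * (g * ?n)"
    using deg sum_bounded_below[of "{w\<in>V. E x w}" "g * ?n"] by auto
  finally have "real (card {w\<in>V. E x w}) * (g * ?n) \<le> (\<Sum>y\<in>V. common y)" .
  moreover have "(g * ?n) * (g * ?n) \<le> real (card {w\<in>V. E x w}) * (g * ?n)"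
    using deg[OF x] nonneg n_pos by (intro mult_right_mono) auto
  moreover have "(\<Sum>y\<in>V. common y) \<le> real (card Good) * ?n + ?n * (\<epsilon> * ?n)"
  proof -
    have "(\<Sum>y\<in>V. common y) = (\<Sum>y\<in>Good. common y) + (\<Sum>y\<in>V - Good. common y)"
      using fin by (metis (no_types, lifting) Good_def mem_Collect_eq subsetI sum.subset_diff add.commute)
    also have "(\<Sum>y\<in>Good. common y) \<le> real (card Good) * ?n"
      using fin sum_bounded_above[of Good common ?n] unfolding common_def by (auto intro: card_mono)
    also have "(\<Sum>y\<in>V - Good. common y) \<le> real (card (V - Good)) * (\<epsilon> * ?n)"
      by (intro sum_bounded_above) (auto simp: Good_def)
    also have "\<dots> \<le> ?n * (\<epsilon> * ?n)"
      using fin nonneg n_pos by (intro mult_right_mono) (auto intro: card_mono)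
    finally show ?thesis by simp
  qed
  ultimately have "(g ^ 2 - \<epsilon>) * ?n * ?n \<le> real (card Good) * ?n"
    by (simp add: power2_eq_square algebra_simps)
  then show ?thesis
    using n_pos unfolding Good_def common_def by simp
qed

lemma card_le_Suc_card_distinct_pairs:
  assumes "finite M"
  shows "card M \<le> Suc (card {p \<in> M \<times> M. fst p \<noteq> snd p})"
proof (cases "M = {}")
  case False
  then obtain v where v: "v \<in> M" by blast
  have "card (M - {v}) = card (Pair v ` (M - {v}))"
    by (rule card_image[symmetric]) (auto simp: inj_on_def)
  also have "\<dots> \<le> card {p \<in> M \<times> M. fst p \<noteq> snd p}"
    using assms v by (intro card_mono) auto
  finally show ?thesis
    using assms v by (simp add: card_Diff_singleton)
qed simp

text \<open>The \<open>c\<close> vertices of \<open>S\<close> have more than \<open>n\<close> neighbours counted with multiplicity, so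
  many vertices are adjacent to two of them.\<close>

lemma exists_pair_with_many_common_nbhd:
  fixes D \<epsilon> :: real
  assumes G: "is_graph V E" and S: "S \<subseteq> V" "card S = c"
    and deg: "\<And>v. v \<in> V \<Longrightarrow> D \<le> real (card {u\<in>V. E v u})"
    and large: "real (card V) + real c ^ 2 * (\<epsilon> * real (card V)) < real c * D" and "0 \<le> \<epsilon>"
  shows "\<exists>x\<in>S. \<exists>y\<in>S. x \<noteq> y \<and> \<epsilon> * real (card V) \<le> real (card {w\<in>V. E x w \<and> E y w})"
proof (rule ccontr)
  let ?n = "real (card V)"
  define D2 where "D2 = {p \<in> S \<times> S. fst p \<noteq> snd p}"
  define nS where "nS z = card {v\<in>S. E v z}" for z
  assume "\<not> ?thesis"
  then have few: "real (card {w\<in>V. E (fst p) w \<and> E (snd p) w}) \<le> \<epsilon> * ?n" if "p \<in> D2" for p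
    using that unfolding D2_def by force
  have fin: "finite V" "finite S"
    using G S finite_subset unfolding is_graph_def by auto
  have "real (nS z) \<le> 1 + real (card {p\<in>D2. E (fst p) z \<and> E (snd p) z})" for z
  proof -
    have "{p\<in>D2. E (fst p) z \<and> E (snd p) z} = {p \<in> {v\<in>S. E v z} \<times> {v\<in>S. E v z}. fst p \<noteq> snd p}"
      unfolding D2_def by auto
    then show ?thesis
      using card_le_Suc_card_distinct_pairs[of "{v\<in>S. E v z}"] fin unfolding nS_def by simp
  qed
  then have "(\<Sum>z\<in>V. real (nS z)) \<le> (\<Sum>z\<in>V. 1 + real (card {p\<in>D2. E (fst p) z \<and> E (snd p) z}))"
    by (rule sum_mono)
  also have "\<dots> = ?n + (\<Sum>p\<in>D2. real (card {z\<in>V. E (fst p) z \<and> E (snd p) z}))"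
    using fin sum_card_filter_swap[of V D2] unfolding D2_def by (simp add: sum.distrib)
  also have "\<dots> \<le> ?n + real (card D2) * (\<epsilon> * ?n)"
    using few sum_bounded_above[of D2 _ "\<epsilon> * ?n"] by simp
  also have "\<dots> \<le> ?n + real c ^ 2 * (\<epsilon> * ?n)"
  proof -
    have "card D2 \<le> card (S \<times> S)"
      unfolding D2_def using fin by (intro card_mono) auto
    then have "real (card D2) \<le> real c ^ 2"
      using S(2) by (simp add: card_cartesian_product power2_eq_square flip: of_nat_mult)
    then show ?thesis
      using \<open>0 \<le> \<epsilon>\<close> by (simp add: mult_right_mono)
  qed
  finally have "(\<Sum>z\<in>V. real (nS z)) \<le> ?n + real c ^ 2 * (\<epsilon> * ?n)" .
  moreover have "real c * D \<le> (\<Sum>z\<in>V. real (nS z))"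
  proof -
    have "real c * D \<le> (\<Sum>v\<in>S. real (card {u\<in>V. E v u}))"
      using deg S sum_bounded_below[of S D "\<lambda>v. real (card {u\<in>V. E v u})"] by auto
    also have "\<dots> = (\<Sum>z\<in>V. real (nS z))"
      unfolding nS_def by (rule sum_card_filter_swap[OF fin(2,1)])
    finally show ?thesis .
  qed
  ultimately show False
    using large by linarith
qed

text \<open>The path density \<open>\<beta>\<^sub>l\<close> guaranteed at level \<open>l\<close>: each level squares the densities of the
  two concatenated paths and loses a factor \<open>4\<^sup>l\<close> from the pigeonhole over pairs of lengths.\<close>

primrec reach_density :: "real \<Rightarrow> real \<Rightarrow> nat \<Rightarrow> real" where
  "reach_density \<theta> \<beta> 0 = \<beta>"
| "reach_density \<theta> \<beta> (Suc l) = \<theta> / 4 ^ l * (reach_density \<theta> \<beta> l / 2) ^ 2 / 2"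

lemma reach_density_bounds:
  assumes "0 < \<theta>" "\<theta> \<le> 1" "0 < \<beta>" "\<beta> \<le> 1"
  shows "0 < reach_density \<theta> \<beta> l" "reach_density \<theta> \<beta> l \<le> 1"
proof -
  have step: "0 < \<theta> / 4 ^ l * (b / 2) ^ 2 / 2 \<and> \<theta> / 4 ^ l * (b / 2) ^ 2 / 2 \<le> 1"
    if "0 < b" "b \<le> 1" for b and l :: nat
  proof -
    have "\<theta> / 4 ^ l \<le> 1"
      using order_trans[OF assms(2) one_le_power[of "4::real" l]] by (simp add: divide_le_eq)
    moreover have "(b / 2) ^ 2 \<le> 1"
      using that by (simp add: power_le_one)
    ultimately have "\<theta> / 4 ^ l * (b / 2) ^ 2 \<le> 1"
      using assms(1) by (intro mult_le_one) auto
    moreover have "0 < \<theta> / 4 ^ l * (b / 2) ^ 2"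
      using assms(1) that(1) by simp
    moreover have "0 < X / 2 \<and> X / 2 \<le> 1" if "0 < X" "X \<le> 1" for X :: real
      using that by simp
    ultimately show ?thesis
      by blast
  qed
  have "0 < reach_density \<theta> \<beta> l \<and> reach_density \<theta> \<beta> l \<le> 1"
    using assms(3,4) step by (induction l) auto
  then show "0 < reach_density \<theta> \<beta> l" "reach_density \<theta> \<beta> l \<le> 1"
    by auto
qed

lemma reach_density_antimono:
  assumes "0 < \<theta>" "\<theta> \<le> 1" "0 < \<beta>" "\<beta> \<le> 1" "l \<le> l'"
  shows "reach_density \<theta> \<beta> l' \<le> reach_density \<theta> \<beta> l"
  using assms(5)
proof (induction l' rule: dec_induct)
  case (step l')
  let ?b = "reach_density \<theta> \<beta> l'"
  have "0 < ?b" "?b \<le> 1"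
    using reach_density_bounds[OF assms(1-4)] by auto
  moreover have "\<theta> / 4 ^ l' \<le> 1"
    using order_trans[OF assms(2) one_le_power[of "4::real" l']] by (simp add: divide_le_eq)
  ultimately have "\<theta> / 4 ^ l' * ((?b / 2) ^ 2 / 2) \<le> 1 * ?b"
    using assms(1) by (intro mult_mono) (auto simp: power2_eq_square)
  with step.IH show ?case
    by simp
qed simp

lemma density_parameter_bounds:
  fixes g \<delta> \<epsilon> \<theta> :: real and c :: nat
  assumes \<delta>_def: "\<delta> = g ^ 2 / 4" and \<epsilon>_def: "\<epsilon> = g ^ 2 / (2 * real c)"
    and \<theta>_def: "\<theta> = \<delta> / (4 * real c ^ 2)" and g: "0 < g" "g \<le> 1 / 2" and c: "2 \<le> c"
  shows "0 < \<epsilon>" "\<epsilon> \<le> g ^ 2 / 2" "0 < \<theta>" "\<theta> \<le> 1"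
    and "0 < \<epsilon> ^ k * g ^ j / 2" "\<epsilon> ^ k * g ^ j / 2 \<le> 1"
proof -
  show "0 < \<epsilon>" "0 < \<theta>"
    using g c unfolding \<epsilon>_def \<theta>_def \<delta>_def by auto
  show \<epsilon>_le: "\<epsilon> \<le> g ^ 2 / 2"
    unfolding \<epsilon>_def using c by (intro divide_left_mono) auto
  have g_sq: "0 < g ^ 2" "g ^ 2 \<le> 1"
    using g by (auto simp: power_le_one)
  have "1 \<le> real c ^ 2"
    using c by (intro one_le_power) simp
  then show "\<theta> \<le> 1"
    using g_sq unfolding \<theta>_def \<delta>_def by (simp add: divide_le_eq)
  show "0 < \<epsilon> ^ k * g ^ j / 2"
    using \<open>0 < \<epsilon>\<close> g by simp
  have "\<epsilon> ^ k \<le> 1" "g ^ j \<le> 1"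
    using \<open>0 < \<epsilon>\<close> \<epsilon>_le g_sq g by (auto intro!: power_le_one)
  then show "\<epsilon> ^ k * g ^ j / 2 \<le> 1"
    using \<open>0 < \<epsilon>\<close> g mult_le_one[of "\<epsilon> ^ k" "g ^ j"] by simp
qed

locale dense_graph =
  fixes V :: "'a set" and E :: "'a \<Rightarrow> 'a \<Rightarrow> bool"
    and g \<delta> \<epsilon> \<theta> :: real and c k q :: nat and \<beta> :: "nat \<Rightarrow> real"
  assumes G: "is_graph V E" and deg: "min_deg_ge V E ((1 / real c + g) * real (card V))"
    and g: "0 < g" "g \<le> 1 / 2" and kq: "1 \<le> k" "1 \<le> q" and c: "2 \<le> c"
    and \<delta>_def: "\<delta> = g ^ 2 / 4" and \<epsilon>_def: "\<epsilon> = g ^ 2 / (2 * real c)"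
    and \<theta>_def: "\<theta> = \<delta> / (4 * real c ^ 2)" and \<beta>_def: "\<beta> = reach_density \<theta> (\<epsilon> ^ k * g ^ (k * (q - 1)) / 2)"
    and V_large: "2 * real c < \<delta> * real (card V)"
    and V_large_for_paths: "real (2 ^ c * (k + q) + 1) ^ 2 \<le> \<beta> c * real (card V)"
begin

definition reach :: "nat \<Rightarrow> 'a \<Rightarrow> 'a \<Rightarrow> bool" where
  "reach l x y \<longleftrightarrow> x \<in> V \<and> y \<in> V \<and> family_reachable k q l (\<beta> l) V E x y"

lemma finite_V: "finite V"
  using G unfolding is_graph_def by simp

lemma card_V_pos: "0 < real (card V)"
proof -
  have "0 < \<delta> * real (card V)"
    using V_large by simp
  then show ?thesis
    using g unfolding \<delta>_def by (simp add: zero_less_mult_iff)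
qed

lemmas params = density_parameter_bounds(1-4)[OF \<delta>_def \<epsilon>_def \<theta>_def g c]
  density_parameter_bounds(5,6)[OF \<delta>_def \<epsilon>_def \<theta>_def g c, of k "k * (q - 1)"]

lemma \<beta>_pos: "0 < \<beta> l"
  unfolding \<beta>_def using reach_density_bounds[OF params(3-6)] by auto

lemma \<beta>_antimono: "l \<le> l' \<Longrightarrow> \<beta> l' \<le> \<beta> l"
  unfolding \<beta>_def using reach_density_antimono[OF params(3-6)] .

lemma paths_fit: 
  assumes "l \<le> c" shows "real (2 ^ l * (k + q) + 1) ^ 2 \<le> \<beta> l * real (card V)"
proof -
  have "2 ^ l * (k + q) + 1 \<le> 2 ^ c * (k + q) + 1"
    using assms by (simp add: power_increasing)
  then have "real (2 ^ l * (k + q) + 1) ^ 2 \<le> real (2 ^ c * (k + q) + 1) ^ 2"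
    by (intro power_mono) (simp_all only: of_nat_le_iff of_nat_0_le_iff)
  also have "\<dots> \<le> \<beta> c * real (card V)"
    by (fact V_large_for_paths)
  also have "\<dots> \<le> \<beta> l * real (card V)"
    using \<beta>_antimono[OF assms] by (intro mult_right_mono) auto
  finally show ?thesis .
qed

lemma degree: "v \<in> V \<Longrightarrow> (1 / real c + g) * real (card V) \<le> real (card {u\<in>V. E v u})"
  using deg unfolding min_deg_ge_def by blast

lemma degree_ge: "v \<in> V \<Longrightarrow> g * real (card V) \<le> real (card {u\<in>V. E v u})"
  using degree mult_right_mono[of g "1 / real c + g" "real (card V)"] by fastforce

lemma reach_0_if_common_nbhd:
  assumes "x \<in> V" "y \<in> V" "x \<noteq> y" "\<epsilon> * real (card V) \<le> real (card {w\<in>V. E x w \<and> E y w})"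
  shows "reach 0 x y"
  using family_reachable_0_if_common_nbhd[OF G degree_ge assms params(1) _ kq] paths_fit[of 0] g assms(1,2)
  unfolding reach_def by (simp add: \<beta>_def)

lemma card_reach_0_ge:
  assumes x: "x \<in> V"
  shows "\<delta> * real (card V) \<le> real (card {y\<in>V. y \<noteq> x \<and> reach 0 x y})"
proof -
  let ?n = "real (card V)" and ?Good = "{y\<in>V. \<epsilon> * real (card V) \<le> real (card {w\<in>V. E x w \<and> E y w})}"
  have "(g ^ 2 - \<epsilon>) * ?n \<le> real (card ?Good)"
    using many_vertices_with_many_common_nbhd[OF G degree_ge x] g params(1) by simp
  also have "\<dots> \<le> real (card (?Good - {x})) + 1"
    using real_card_Diff_singleton_ge[of ?Good x] finite_V by simp
  also have "card (?Good - {x}) \<le> card {y\<in>V. y \<noteq> x \<and> reach 0 x y}"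
    using finite_V reach_0_if_common_nbhd x by (intro card_mono) auto
  finally have "(g ^ 2 - \<epsilon>) * ?n - 1 \<le> real (card {y\<in>V. y \<noteq> x \<and> reach 0 x y})"
    by simp
  moreover have "g ^ 2 / 2 * ?n \<le> (g ^ 2 - \<epsilon>) * ?n"
    using params(2) card_V_pos by (intro mult_right_mono) auto
  moreover have "g ^ 2 / 2 * ?n = 2 * (\<delta> * ?n)"
    unfolding \<delta>_def by simp
  ultimately show ?thesis
    using V_large c by linarith
qed

lemma reach_0_in_large_sets:
  assumes S: "S \<subseteq> V" "c \<le> card S"
  shows "\<exists>x\<in>S. \<exists>y\<in>S. x \<noteq> y \<and> reach 0 x y"
proof -
  let ?n = "real (card V)"
  obtain S' where S': "S' \<subseteq> S" "card S' = c"
    using obtain_subset_with_card_n[OF S(2)] by blast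
  have "real c ^ 2 * (\<epsilon> * ?n) = real c * (g ^ 2 / 2) * ?n"
    using c unfolding \<epsilon>_def by (simp add: power2_eq_square)
  moreover have "real c * ((1 / real c + g) * ?n) = ?n + real c * g * ?n"
    using c by (simp add: field_simps)
  moreover have "g * (g / 2) < g * 1"
    using g by (intro mult_strict_left_mono) auto
  then have "real c * (g ^ 2 / 2) * ?n < real c * g * ?n"
    using c card_V_pos by (intro mult_strict_right_mono mult_strict_left_mono) (auto simp: power2_eq_square)
  ultimately have large: "?n + real c ^ 2 * (\<epsilon> * ?n) < real c * ((1 / real c + g) * ?n)"
    by linarith
  have "S' \<subseteq> V"
    using S S' by blast
  then obtain x y where "x \<in> S'" "y \<in> S'" "x \<noteq> y" "\<epsilon> * ?n \<le> real (card {w\<in>V. E x w \<and> E y w})"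
    using exists_pair_with_many_common_nbhd[OF G _ S'(2) degree large] params(1) by auto
  then show ?thesis
    using reach_0_if_common_nbhd S S' by blast
qed

lemma reach_Suc_if_many_midpoints:
  assumes l: "l < c" and xy: "x \<in> V" "y \<in> V" "x \<noteq> y"
    and mid: "\<theta> * real (card V) \<le> real (card {z\<in>V. reach l x z \<and> reach l z y})"
  shows "reach (Suc l) x y"
proof -
  have "{z\<in>V. reach l x z \<and> reach l z y} =
      {z\<in>V. family_reachable k q l (\<beta> l) V E x z \<and> family_reachable k q l (\<beta> l) V E z y}"
    using xy unfolding reach_def by auto
  moreover have "real (2 ^ Suc l * (k + q) + 1) ^ 2 \<le> \<theta> / 4 ^ l * (\<beta> l / 2) ^ 2 / 2 * real (card V)"
    using paths_fit[of "Suc l"] l unfolding \<beta>_def by simp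
  ultimately have "family_reachable k q (Suc l) (\<theta> / 4 ^ l * (\<beta> l / 2) ^ 2 / 2) V E x y"
    using mid by (intro family_reachable_Suc_if_many_midpoints[OF G kq(2) xy \<beta>_pos params(3)]) auto
  then show ?thesis
    using xy unfolding reach_def by (simp add: \<beta>_def)
qed

lemma leveled_reachability: "leveled_reachability V reach c \<delta> \<theta>"
proof
  show "reach l y x" if "reach l x y" for l x y
    using that family_reachable_commute unfolding reach_def by metis
  show "reach (Suc l) x y" if "reach l x y" for l x y
    using that family_reachable_mono[of k q l "\<beta> l" V E x y "Suc l" "\<beta> (Suc l)"] \<beta>_antimono[of l "Suc l"]
    unfolding reach_def by auto
  show "4 * real c ^ 2 * \<theta> \<le> \<delta>"
    using c unfolding \<theta>_def \<delta>_def by simp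
qed (use finite_V card_reach_0_ge reach_0_in_large_sets reach_Suc_if_many_midpoints params(3) V_large in auto)

theorem closed_partition:
  "\<exists>P. partition_on V P \<and> card P \<le> c - 1 \<and>
     (\<forall>X\<in>P. family_closed k q c (\<beta> c) V E X \<and> real (card X) \<ge> \<delta> / 2 * real (card V))"
proof -
  interpret partition: leveled_reachability V reach c \<delta> \<theta>
    by (fact leveled_reachability)
  obtain P where "partition_on V P" "card P < c"
    "\<forall>X\<in>P. (\<forall>x\<in>X. \<forall>y\<in>X. x \<noteq> y \<longrightarrow> reach c x y) \<and> \<delta> / 2 * real (card V) \<le> real (card X)"
    using partition.closed_partition_exists by blast
  then show ?thesis
    unfolding family_closed_def reach_def by (intro exI[of _ P]) auto
qed

end

lemma ceiling_ratio_bounds: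
  assumes "real r / 2 < real k" "r = k + q" "1 \<le> q"
  shows "2 \<le> nat \<lceil>real r / real q\<rceil>" "1 / real (nat \<lceil>real r / real q\<rceil>) \<le> 1 - real k / real r"
proof -
  have ratio: "2 < real r / real q"
    using assms by (simp add: field_simps)
  then show "2 \<le> nat \<lceil>real r / real q\<rceil>"
    by linarith
  have "real r / real q \<le> real (nat \<lceil>real r / real q\<rceil>)"
    by linarith
  then have "1 / real (nat \<lceil>real r / real q\<rceil>) \<le> 1 / (real r / real q)"
    using ratio by (intro divide_left_mono mult_pos_pos) linarith+
  also have "\<dots> = 1 - real k / real r"
    using assms(2,3) by (simp add: field_simps)
  finally show "1 / real (nat \<lceil>real r / real q\<rceil>) \<le> 1 - real k / real r" .
qed

lemma less_if_nat_ceiling_sum_le: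
  fixes a b :: real
  assumes "0 \<le> a" "0 \<le> b" "nat \<lceil>a + b\<rceil> + 1 \<le> n"
  shows "a < real n" "b < real n"
  using assms by linarith+

lemma min_deg_ge_mono: "d \<le> d' \<Longrightarrow> min_deg_ge V E d' \<Longrightarrow> min_deg_ge V E d"
  unfolding min_deg_ge_def by force

theorem closed_partition_of_large_dense_graphs:
  fixes g d :: real and c k q :: nat
  assumes g: "0 < g" "g \<le> 1 / 2" "1 / real c + g \<le> d" and kq: "1 \<le> k" "1 \<le> q" and c: "2 \<le> c"
  shows "\<exists>\<beta>>0. \<exists>\<alpha>>0. \<exists>n0::nat. \<forall>(V::'a set) E. is_graph V E \<longrightarrow> card V \<ge> n0 \<longrightarrow>
    min_deg_ge V E (d * real (card V)) \<longrightarrow>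
    (\<exists>P. partition_on V P \<and> card P \<le> c - 1 \<and>
       (\<forall>X\<in>P. family_closed k q c \<beta> V E X \<and> real (card X) \<ge> \<alpha> * real (card V)))"
proof -
  define \<delta> \<epsilon> \<theta> where "\<delta> = g ^ 2 / 4" and "\<epsilon> = g ^ 2 / (2 * real c)" and "\<theta> = \<delta> / (4 * real c ^ 2)"
  define \<beta> where "\<beta> = reach_density \<theta> (\<epsilon> ^ k * g ^ (k * (q - 1)) / 2)"
  define n0 where "n0 = nat \<lceil>8 * real c / g ^ 2 + real (2 ^ c * (k + q) + 1) ^ 2 / \<beta> c\<rceil> + 1"
  have \<beta>_pos: "0 < \<beta> c"
    unfolding \<beta>_def by (intro reach_density_bounds density_parameter_bounds[OF \<delta>_def \<epsilon>_def \<theta>_def g(1,2) c])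
  have "\<forall>(V::'a set) E. is_graph V E \<longrightarrow> card V \<ge> n0 \<longrightarrow> min_deg_ge V E (d * real (card V)) \<longrightarrow>
      (\<exists>P. partition_on V P \<and> card P \<le> c - 1 \<and>
         (\<forall>X\<in>P. family_closed k q c (\<beta> c) V E X \<and> real (card X) \<ge> \<delta> / 2 * real (card V)))"
  proof (intro allI impI)
    fix V :: "'a set" and E
    assume G: "is_graph V E" and n: "n0 \<le> card V" and deg: "min_deg_ge V E (d * real (card V))"
    show "\<exists>P. partition_on V P \<and> card P \<le> c - 1 \<and>
      (\<forall>X\<in>P. family_closed k q c (\<beta> c) V E X \<and> real (card X) \<ge> \<delta> / 2 * real (card V))"
    proof (rule dense_graph.closed_partition, unfold_locales)
      show "min_deg_ge V E ((1 / real c + g) * real (card V))"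
        using g(3) by (intro min_deg_ge_mono[OF _ deg] mult_right_mono) auto
      have "0 \<le> real (2 ^ c * (k + q) + 1) ^ 2 / \<beta> c"
        using \<beta>_pos by simp
      note n_large = less_if_nat_ceiling_sum_le[OF _ this n[unfolded n0_def]]
      show "2 * real c < \<delta> * real (card V)"
        using n_large(1) g(1) unfolding \<delta>_def by (simp add: field_simps)
      show "real (2 ^ c * (k + q) + 1) ^ 2 \<le> \<beta> c * real (card V)"
        using n_large(2) \<beta>_pos by (simp add: field_simps)
    qed (use G g kq c \<delta>_def \<epsilon>_def \<theta>_def \<beta>_def in auto)
  qed
  moreover have "0 < \<delta> / 2"
    unfolding \<delta>_def using g(1) by simp
  ultimately show ?thesis
    using \<beta>_pos by blast
qed

theorem lemma6p11:
  fixes \<gamma> :: real and r k q :: nat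
  assumes "\<gamma> > 0" and "real r / 2 < real k" and "k \<le> r - 1" and "r = k + q"
  shows "let c = nat \<lceil>real r / real q\<rceil> in
    \<exists>\<beta>>0. \<exists>\<alpha>>0. \<exists>n0::nat. \<forall>(V::nat set) E.
      is_graph V E \<longrightarrow> card V \<ge> n0 \<longrightarrow>
      min_deg_ge V E ((1 - real k / real r + \<gamma>) * real (card V)) \<longrightarrow>
      (\<exists>P. partition_on V P \<and> card P \<le> c - 1 \<and>
         (\<forall>X\<in>P. family_closed k q c \<beta> V E X \<and> real (card X) \<ge> \<alpha> * real (card V)))"
proof -
  have kq: "1 \<le> k" "1 \<le> q"
    using assms(2-4) by linarith+
  define c where "c = nat \<lceil>real r / real q\<rceil>"
  have c: "2 \<le> c" "1 / real c \<le> 1 - real k / real r"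
    unfolding c_def using ceiling_ratio_bounds[OF assms(2,4) kq(2)] by auto
  define g where "g = min \<gamma> (1 / 2)"
  have g: "0 < g" "g \<le> 1 / 2" "1 / real c + g \<le> 1 - real k / real r + \<gamma>"
    unfolding g_def using assms(1) c(2) by auto
  show ?thesis
    unfolding Let_def c_def[symmetric] by (rule closed_partition_of_large_dense_graphs[OF g kq c(1)])
qed

end
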